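(* Let $\Bbbk$ be an algebraically closed field of arbitrary characteristic, $V=\Bbbk^n$, $G=\mathrm{GL}(V)$ with its natural representation $\eta$ on $V$, and let $\underline{G}=G\ltimes_\eta V$ be the enhanced group, i.e. the variety $G\times V$ with product $(g_1,v_1)\cdot(g_2,v_2)=(g_1g_2,\ g_1v_2+v_1)$. Its Lie algebra is $\underline{\mathfrak g}=\mathfrak{gl}(V)\times V$, with adjoint action $\mathrm{Ad}(g,v)(X,w)=(\mathrm{Ad}(g)X,\ -(\mathrm{Ad}(g)X)v+gw)$, and its nilpotent cone is $\underline{\mathcal N}=\mathcal N\times V$, where $\mathcal N$ is the nilpotent cone of $\mathfrak{gl}(V)$. For a partition $\lambda$ of $n$ write $\lambda=(a_1\ge a_2\ge\cdots\ge a_t>0)=(b_1^{d_1}b_2^{d_2}\cdots b_r^{d_r})$ with $b_1>b_2>\cdots>b_r>0$, each $b_j$ occurring $d_j>0$ times, and set $d_0=0$. An enhanced partition of $n$ is a pair $\lambda[q]$ with $\lambda$ a partition of $n$ and $q\in\{d_0+d_1+\cdots+d_{j-1}\mid j=1,\dots,r+1\}$; let $\mathscr P_n^{e}$ denote the set of all enhanced partitions of $n$. Let $J_\lambda$ be the Jordan standard nilpotent matrix of type $\lambda$, with Jordan basis $\{J_\lambda^k v_i\mid 1\le i\le t,\ 0\le k\le a_i-1\}$ (so $J_\lambda^{a_i}v_i=0$), and put $u_j=v_{d_1+\cdots+d_j}$ for $j=1,\dots,r$ and $u_{r+1}=0$. For $q=d_0+\cdots+d_{j-1}$ let $\mathcal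 O_{\lambda[q]}$ be the $\underline G$-orbit of $(J_\lambda,u_j)$ in $\underline{\mathcal N}$ under the adjoint action (for $\lambda=(1^n)$, i.e. $J_\lambda=0$, this gives $\mathcal O_{(1^n)[0]}=\{0\}\times(V\setminus\{0\})$ and $\mathcal O_{(1^n)[n]}=\{(0,0)\}$). Then $\{\mathcal O_{\lambda[q]}\mid \lambda[q]\in\mathscr P_n^{e}\}$ is the complete set of nilpotent orbits in $\underline{\mathcal N}$ under the adjoint $\underline G$-action, these orbits being pairwise distinct; that is, the $\underline G$-orbits in $\underline{\mathcal N}$ are parameterized by the enhanced partitions of $n$, equivalently by the set $\{(\lambda,q)\mid \lambda=(b_1^{d_1}\cdots b_r^{d_r})\text{ a partition of } n,\ q=d_0+d_1+\cdots+d_{j-1},\ j=1,\dots,r+1\}$.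
   Context: Enhanced reductive group associated with the natural representation of $\mathrm{GL}_n$: $\underline G=\mathrm{GL}(V)\ltimes_\eta V$, $\underline{\mathfrak g}=\mathfrak{gl}(V)\times V$ with bracket $[(X_1,v_1),(X_2,v_2)]=([X_1,X_2],X_1v_2-X_2v_1)$; the ground field $\Bbbk$ is algebraically closed of any characteristic. *)

theory Defs
  imports "Jordan_Normal_Form.Jordan_Normal_Form" "HOL-Computational_Algebra.Polynomial"
begin

definition alg_closed :: "'a :: field itself \<Rightarrow> bool" where
  "alg_closed TYPE('a) \<longleftrightarrow> (\<forall>p :: 'a poly. degree p > 0 \<longrightarrow> (\<exists>x. poly p x = 0))"

definition is_partition :: "nat \<Rightarrow> nat list \<Rightarrow> bool" where
  "is_partition n lam \<longleftrightarrow> sorted_wrt (\<ge>) lam \<and> (\<forall>a \<in> set lam. 0 < a) \<and> sum_list lam = n"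

text \<open>Admissible q for lam = (b_1^d_1 ... b_r^d_r): q = d_0 + ... + d_(j-1), j = 1..r+1.
  For j \<le> r this is the number of parts strictly larger than b_j; for j = r+1 it is t = length lam.\<close>
definition enh_q :: "nat list \<Rightarrow> nat set" where
  "enh_q lam = {length (filter (\<lambda>a. b < a) lam) | b. b \<in> set lam} \<union> {length lam}"

definition enhanced_partitions :: "nat \<Rightarrow> (nat list \<times> nat) set" where
  "enhanced_partitions n = {(lam, q). is_partition n lam \<and> q \<in> enh_q lam}"

text \<open>Jordan standard nilpotent matrix of type lam (library convention: ones on the superdiagonal).\<close>
definition J_part :: "nat list \<Rightarrow> 'a :: field mat" where
  "J_part lam = jordan_matrix (map (\<lambda>a. (a, 0)) lam)"

text \<open>Generator v_(i+1) (0-indexed i) of the i-th Jordan block: J^k v_i run through the block,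
  J^(a_i) v_i = 0. With the superdiagonal convention it is the last basis vector of the block.\<close>
definition jordan_gen :: "nat \<Rightarrow> nat list \<Rightarrow> nat \<Rightarrow> 'a :: field vec" where
  "jordan_gen n lam i = unit_vec n (sum_list (take (Suc i) lam) - 1)"

text \<open>u_j = v_(d_1+...+d_j) = v_(q+1) for q = d_0+...+d_(j-1) < t, and u_(r+1) = 0 (q = t).\<close>
definition u_vec :: "nat \<Rightarrow> nat list \<Rightarrow> nat \<Rightarrow> 'a :: field vec" where
  "u_vec n lam q = (if q < length lam then jordan_gen n lam q else 0\<^sub>v n)"

definition enh_nilcone :: "nat \<Rightarrow> ('a :: field mat \<times> 'a vec) set" where
  "enh_nilcone n = {(X, w). X \<in> carrier_mat n n \<and> (\<exists>m. X ^\<^sub>m m = 0\<^sub>m n n) \<and> w \<in> carrier_vec n}"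

text \<open>Adjoint action of (g,v) in GL_n \<ltimes> k^n: Ad(g,v)(X,w) = (g X g^-1, -(g X g^-1) v + g w).
  Here h is the inverse of g.\<close>
definition enh_orbit :: "nat \<Rightarrow> 'a :: field mat \<times> 'a vec \<Rightarrow> ('a mat \<times> 'a vec) set" where
  "enh_orbit n xw = {(g * fst xw * h, - ((g * fst xw * h) *\<^sub>v v) + g *\<^sub>v snd xw) | g h v.
      g \<in> carrier_mat n n \<and> h \<in> carrier_mat n n \<and> g * h = 1\<^sub>m n \<and> h * g = 1\<^sub>m n \<and> v \<in> carrier_vec n}"

definition O_enh :: "nat \<Rightarrow> nat list \<Rightarrow> nat \<Rightarrow> ('a :: field mat \<times> 'a vec) set" where
  "O_enh n lam q = enh_orbit n (J_part lam, u_vec n lam q)"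

end

theory Submission
  imports Defs "HOL-Combinatorics.Permutations" "Jordan_Normal_Form.Jordan_Normal_Form_Uniqueness"
    "Jordan_Normal_Form.Jordan_Normal_Form_Existence"
begin

text \<open>
  The matrix part of an orbit is a conjugacy class of nilpotent matrices, hence given by a partition
  \<open>\<lambda>\<close> via the Jordan normal form (nilpotent matrices are triangularizable over any field).
  With \<open>X = J\<^sub>\<lambda>\<close> fixed, the translations \<open>w \<mapsto> w - J\<^sub>\<lambda> v\<close> reduce \<open>w\<close> to a combination
  \<open>\<Sum>\<^sub>i c\<^sub>i v\<^sub>i\<close> of the block generators, and the elements \<open>1 + x T\<close>, where \<open>T\<close> maps block \<open>j\<close>
  onto a block \<open>i\<close> that is not larger, top to top, commute with \<open>J\<^sub>\<lambda>\<close> and replace \<open>c\<^sub>i\<close> by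
  \<open>c\<^sub>i + x c\<^sub>j\<close>. If \<open>i\<^sub>0\<close> is the first block with \<open>c\<^sub>i\<^sub>0 \<noteq> 0\<close> and \<open>q\<close> the first block of the
  same size, no block carrying a coefficient is larger than block \<open>q\<close>, so all coefficients but
  \<open>c\<^sub>q\<close> can be cleared and \<open>c\<^sub>q\<close> scaled to \<open>1\<close>: this is the vector \<open>u\<close> of \<open>\<lambda>[q]\<close>
  (\<open>u = 0\<close> if all \<open>c\<^sub>i\<close> vanish). Distinct \<open>q\<close> give distinct orbits because the least \<open>k\<close> with
  \<open>X\<^sup>k w \<in> im X\<^sup>k\<^sup>+\<^sup>1\<close> is an orbit invariant, equal to the size of the block generated by \<open>u\<close>.
\<close>

section \<open>Matrices of partial index maps\<close>

definition mat_of_map :: "nat \<Rightarrow> (nat \<rightharpoonup> nat) \<Rightarrow> 'a :: semiring_1 mat" where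
  "mat_of_map n f = mat n n (\<lambda>(p, q). if f q = Some p then 1 else 0)"

definition map_closed :: "nat \<Rightarrow> (nat \<rightharpoonup> nat) \<Rightarrow> bool" where
  "map_closed n f \<longleftrightarrow> (\<forall>q<n. \<forall>p. f q = Some p \<longrightarrow> p < n)"

lemma mat_of_map_carrier[simp]: "mat_of_map n f \<in> carrier_mat n n"
  by (simp add: mat_of_map_def)

lemma mat_of_map_dim[simp]: "dim_row (mat_of_map n f) = n" "dim_col (mat_of_map n f) = n"
  by (simp_all add: mat_of_map_def)

lemma index_mat_of_map[simp]:
  "p < n \<Longrightarrow> q < n \<Longrightarrow> mat_of_map n f $$ (p, q) = (if f q = Some p then 1 else 0)"
  by (simp add: mat_of_map_def)

lemma mat_of_map_cong: "(\<And>q. q < n \<Longrightarrow> f q = g q) \<Longrightarrow> mat_of_map n f = mat_of_map n g"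
  by (rule eq_matI) auto

lemma mat_of_map_Some: "mat_of_map n Some = 1\<^sub>m n"
  by (rule eq_matI) auto

lemma mat_of_map_empty: "mat_of_map n Map.empty = 0\<^sub>m n n"
  by (rule eq_matI) auto

lemma mat_of_map_mult:
  assumes "map_closed n f"
  shows "mat_of_map n g * mat_of_map n f = (mat_of_map n (g \<circ>\<^sub>m f) :: 'a :: semiring_1 mat)"
proof (rule eq_matI)
  fix p q assume "p < dim_row (mat_of_map n (g \<circ>\<^sub>m f) :: 'a mat)" "q < dim_col (mat_of_map n (g \<circ>\<^sub>m f) :: 'a mat)"
  then have pq: "p < n" "q < n" by auto
  have "(mat_of_map n g * mat_of_map n f :: 'a mat) $$ (p, q)
      = (\<Sum>r\<in>{0..<n}. (if g r = Some p then 1 else 0) * (if f q = Some r then 1 else 0))"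
    using pq by (simp add: scalar_prod_def)
  also have "\<dots> = (if (g \<circ>\<^sub>m f) q = Some p then 1 else 0)"
  proof (cases "f q")
    case (Some r0)
    with assms pq have "r0 < n" by (auto simp: map_closed_def)
    have "(\<Sum>r\<in>{0..<n}. (if g r = Some p then 1 else 0) * (if f q = Some r then 1 else 0))
        = (\<Sum>r\<in>{0..<n}. if r = r0 then (if g r0 = Some p then 1 else 0) else (0 :: 'a))"
      by (rule sum.cong) (auto simp: Some)
    with \<open>r0 < n\<close> Some show ?thesis by simp
  qed simp
  finally show "(mat_of_map n g * mat_of_map n f :: 'a mat) $$ (p, q) = mat_of_map n (g \<circ>\<^sub>m f) $$ (p, q)"
    using pq by simp
qed auto

lemma mat_of_map_inverse:
  assumes "\<And>r. r < n \<Longrightarrow> \<sigma> r < n \<and> \<pi> (\<sigma> r) = r"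
  shows "mat_of_map n (Some \<circ> \<pi>) * mat_of_map n (Some \<circ> \<sigma>) = (1\<^sub>m n :: 'a :: semiring_1 mat)"
proof -
  have "map_closed n (Some \<circ> \<sigma>)" using assms by (simp add: map_closed_def)
  then have "mat_of_map n (Some \<circ> \<pi>) * mat_of_map n (Some \<circ> \<sigma>)
      = (mat_of_map n ((Some \<circ> \<pi>) \<circ>\<^sub>m (Some \<circ> \<sigma>)) :: 'a mat)"
    by (rule mat_of_map_mult)
  also have "\<dots> = mat_of_map n Some" using assms by (intro mat_of_map_cong) (simp add: map_comp_def)
  finally show ?thesis by (simp add: mat_of_map_Some)
qed

lemma similar_mat_of_map_conj:
  assumes "\<And>r. r < n \<Longrightarrow> \<sigma> r < n \<and> \<tau> (\<sigma> r) = r" "\<And>r. r < n \<Longrightarrow> \<tau> r < n \<and> \<sigma> (\<tau> r) = r"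
    and "map_closed n f"
  shows "similar_mat (mat_of_map n (\<lambda>r. map_option \<sigma> (f (\<tau> r)))) (mat_of_map n f :: 'a :: semiring_1 mat)"
proof -
  let ?A = "mat_of_map n (Some \<circ> \<sigma>) :: 'a mat" and ?B = "mat_of_map n (Some \<circ> \<tau>) :: 'a mat"
  have closed: "map_closed n (Some \<circ> \<tau>)" "map_closed n (f \<circ>\<^sub>m (Some \<circ> \<tau>))"
    using assms by (auto simp: map_closed_def map_comp_def)
  have "?A * mat_of_map n f * ?B = ?A * (mat_of_map n f * ?B)"
    by (rule assoc_mult_mat[OF mat_of_map_carrier mat_of_map_carrier mat_of_map_carrier])
  also have "\<dots> = mat_of_map n ((Some \<circ> \<sigma>) \<circ>\<^sub>m (f \<circ>\<^sub>m (Some \<circ> \<tau>)))"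
    by (simp only: mat_of_map_mult closed)
  also have "\<dots> = mat_of_map n (\<lambda>r. map_option \<sigma> (f (\<tau> r)))"
    by (rule mat_of_map_cong) (simp add: map_comp_def map_option_case o_def)
  finally have "mat_of_map n (\<lambda>r. map_option \<sigma> (f (\<tau> r))) = ?A * mat_of_map n f * ?B" ..
  moreover have "?A * ?B = 1\<^sub>m n" "?B * ?A = 1\<^sub>m n" by (simp_all add: mat_of_map_inverse assms)
  ultimately show ?thesis by (intro similar_matI[of _ _ _ _ n]) auto
qed

lemma mat_of_map_mult_vec_index:
  assumes "p < n" "v \<in> carrier_vec n"
  shows "(mat_of_map n f *\<^sub>v v) $ p = (\<Sum>q\<in>{0..<n}. if f q = Some p then v $ q else (0 :: 'a :: semiring_1))"
  using assms by (auto simp: scalar_prod_def intro: sum.cong)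

lemma mat_of_map_mult_vec_unique:
  assumes "p < n" "v \<in> carrier_vec n" "q < n" "f q = Some p"
    and "\<And>r. r < n \<Longrightarrow> f r = Some p \<Longrightarrow> r = q"
  shows "(mat_of_map n f *\<^sub>v v) $ p = (v $ q :: 'a :: semiring_1)"
proof -
  have "(\<Sum>r\<in>{0..<n}. if f r = Some p then v $ r else 0) = (\<Sum>r\<in>{0..<n}. if r = q then v $ q else 0)"
  proof (rule sum.cong)
    fix r assume "r \<in> {0..<n}"
    then have "f r = Some p \<longleftrightarrow> r = q" using assms(4,5) by auto
    then show "(if f r = Some p then v $ r else 0) = (if r = q then v $ q else 0)" by simp
  qed simp
  also have "\<dots> = v $ q" using assms(3) by simp
  finally show ?thesis by (simp only: mat_of_map_mult_vec_index[OF assms(1,2)])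
qed

lemma mat_of_map_mult_vec_outside:
  assumes "p < n" "v \<in> carrier_vec n" "\<And>r. r < n \<Longrightarrow> f r \<noteq> Some p"
  shows "(mat_of_map n f *\<^sub>v v) $ p = (0 :: 'a :: semiring_1)"
  unfolding mat_of_map_mult_vec_index[OF assms(1,2)] using assms(3) by (intro sum.neutral) simp

lemma mat_of_map_mult_unit_vec:
  assumes "map_closed n f" "q < n"
  shows "mat_of_map n f *\<^sub>v unit_vec n q = (case f q of Some p \<Rightarrow> unit_vec n p | None \<Rightarrow> 0\<^sub>v n)"
proof (rule eq_vecI)
  fix p assume "p < dim_vec (case f q of Some p \<Rightarrow> unit_vec n p | None \<Rightarrow> (0\<^sub>v n :: 'a vec))"
  then have p: "p < n" by (cases "f q") auto
  have "(mat_of_map n f *\<^sub>v unit_vec n q :: 'a vec) $ p = (\<Sum>r\<in>{0..<n}. if f r = Some p then unit_vec n q $ r else 0)"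
    by (rule mat_of_map_mult_vec_index[OF p]) simp
  also have "\<dots> = (\<Sum>r\<in>{0..<n}. if r = q then (if f q = Some p then 1 else 0) else (0 :: 'a))"
    by (rule sum.cong) (auto simp: assms)
  also have "\<dots> = (case f q of Some p \<Rightarrow> unit_vec n p | None \<Rightarrow> (0\<^sub>v n :: 'a vec)) $ p"
    using assms p by (cases "f q") (auto simp: map_closed_def)
  finally show "(mat_of_map n f *\<^sub>v unit_vec n q :: 'a vec) $ p = (case f q of Some p \<Rightarrow> unit_vec n p | None \<Rightarrow> 0\<^sub>v n) $ p" .
qed (cases "f q", auto)

section \<open>Jordan matrices in block coordinates\<close>

text \<open>
  Index \<open>block_idx lam i s\<close> is offset \<open>s\<close> in the \<open>i\<close>-th Jordan block (both counted from \<open>0\<close>).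
  \<open>J_part\<close> has its ones on the superdiagonal, so it lowers offsets by one and the generator of
  block \<open>i\<close> sits at offset \<open>lam ! i - 1\<close>.
\<close>

fun block_coord :: "nat list \<Rightarrow> nat \<Rightarrow> nat \<times> nat" where
  "block_coord [] p = (0, p)"
| "block_coord (a # as) p = (if p < a then (0, p) else apfst Suc (block_coord as (p - a)))"

definition block_idx :: "nat list \<Rightarrow> nat \<Rightarrow> nat \<Rightarrow> nat" where
  "block_idx lam i s = sum_list (take i lam) + s"

lemma block_idx_Cons[simp]:
  "block_idx (a # lam) 0 s = s" "block_idx (a # lam) (Suc i) s = a + block_idx lam i s"
  by (simp_all add: block_idx_def)

lemma block_coord_block_idx[simp]:
  "i < length lam \<Longrightarrow> s < lam ! i \<Longrightarrow> block_coord lam (block_idx lam i s) = (i, s)"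
proof (induction lam arbitrary: i)
  case (Cons a lam) then show ?case by (cases i) auto
qed simp

lemma block_idx_less:
  "i < length lam \<Longrightarrow> s < lam ! i \<Longrightarrow> block_idx lam i s < sum_list lam"
proof (induction lam arbitrary: i)
  case (Cons a lam) then show ?case by (cases i) auto
qed simp

lemma block_idx_eq_iff:
  assumes "i < length lam" "s < lam ! i" "i' < length lam" "s' < lam ! i'"
  shows "block_idx lam i s = block_idx lam i' s' \<longleftrightarrow> i = i' \<and> s = s'"
  by (metis assms block_coord_block_idx prod.inject)

lemma block_idxE:
  assumes "p < sum_list lam"
  obtains i s where "i < length lam" "s < lam ! i" "p = block_idx lam i s"
  using assms
proof (induction lam arbitrary: p thesis)
  case (Cons a lam)
  show ?case
  proof (cases "p < a")
    case True
    then show ?thesis using Cons.prems(1)[of 0 p] by simp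
  next
    case False
    then have "p - a < sum_list lam" using Cons.prems(2) by simp
    from Cons.IH[OF _ this] obtain i s where "i < length lam" "s < lam ! i" "p - a = block_idx lam i s"
      by blast
    then show ?thesis using Cons.prems(1)[of "Suc i" s] False by simp
  qed
qed simp

lemma mat_of_map_block_cong:
  assumes "\<And>i s. i < length lam \<Longrightarrow> s < lam ! i \<Longrightarrow> f (block_idx lam i s) = g (block_idx lam i s)"
  shows "mat_of_map (sum_list lam) f = mat_of_map (sum_list lam) g"
  by (rule mat_of_map_cong) (metis assms block_idxE)

lemma map_closed_blockI:
  assumes "\<And>i s p. i < length lam \<Longrightarrow> s < lam ! i \<Longrightarrow> f (block_idx lam i s) = Some p \<Longrightarrow> p < sum_list lam"
  shows "map_closed (sum_list lam) f"
  unfolding map_closed_def by (metis assms block_idxE)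

lemma vec_eq_blockI:
  assumes "v \<in> carrier_vec (sum_list lam)" "v' \<in> carrier_vec (sum_list lam)"
    and "\<And>i s. i < length lam \<Longrightarrow> s < lam ! i \<Longrightarrow> v $ block_idx lam i s = v' $ block_idx lam i s"
  shows "v = v'"
  by (rule eq_vecI) (use assms in \<open>auto elim: block_idxE\<close>)

definition jordan_shift :: "nat list \<Rightarrow> nat \<Rightarrow> nat \<rightharpoonup> nat" where
  "jordan_shift lam k p =
     (case block_coord lam p of (i, s) \<Rightarrow> if k \<le> s then Some (block_idx lam i (s - k)) else None)"

lemma jordan_shift_block_idx[simp]:
  "i < length lam \<Longrightarrow> s < lam ! i \<Longrightarrow>
   jordan_shift lam k (block_idx lam i s) = (if k \<le> s then Some (block_idx lam i (s - k)) else None)"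
  by (simp add: jordan_shift_def)

lemma map_closed_jordan_shift: "map_closed (sum_list lam) (jordan_shift lam k)"
  by (rule map_closed_blockI) (auto simp: block_idx_less split: if_splits)

lemma jordan_shift_Cons:
  "jordan_shift (a # lam) 1 p =
     (if p < a then (if p = 0 then None else Some (p - 1)) else map_option ((+) a) (jordan_shift lam 1 (p - a)))"
proof (cases "p < a")
  case False
  obtain i s where "block_coord lam (p - a) = (i, s)" by fastforce
  with False show ?thesis by (simp add: jordan_shift_def)
qed (simp add: jordan_shift_def)

lemma J_part_carrier: "J_part lam \<in> carrier_mat (sum_list lam) (sum_list lam)"
  unfolding J_part_def carrier_mat_def by (simp add: comp_def)

lemma J_part_dim[simp]: "dim_row (J_part lam) = sum_list lam" "dim_col (J_part lam) = sum_list lam"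
  using J_part_carrier[of lam] by auto

lemma J_part_Cons:
  "J_part (a # lam) = four_block_mat (jordan_block a 0) (0\<^sub>m a (sum_list lam)) (0\<^sub>m (sum_list lam) a) (J_part lam)"
  by (simp add: J_part_def jordan_matrix_Cons comp_def)

lemma J_part_eq_mat_of_map: "(J_part lam :: 'a :: field mat) = mat_of_map (sum_list lam) (jordan_shift lam 1)"
proof (induction lam)
  case Nil
  then show ?case by (auto simp: J_part_def jordan_matrix_def intro: eq_matI)
next
  case (Cons a lam)
  show ?case
  proof (rule eq_matI)
    fix p q assume "p < dim_row (mat_of_map (sum_list (a # lam)) (jordan_shift (a # lam) 1) :: 'a mat)"
      "q < dim_col (mat_of_map (sum_list (a # lam)) (jordan_shift (a # lam) 1) :: 'a mat)"
    then have pq: "p < a + sum_list lam" "q < a + sum_list lam" by auto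
    have shift: "map_option ((+) a) (jordan_shift lam 1 (q - a)) = Some p \<longleftrightarrow> jordan_shift lam 1 (q - a) = Some (p - a)"
      if "a \<le> p" using that by (cases "jordan_shift lam 1 (q - a)") auto
    show "J_part (a # lam) $$ (p, q) = (mat_of_map (sum_list (a # lam)) (jordan_shift (a # lam) 1) :: 'a mat) $$ (p, q)"
      unfolding J_part_Cons jordan_shift_Cons using pq Cons.IH shift
      by (cases "p < a"; cases "q < a") auto
  qed auto
qed

lemma J_part_pow: "(J_part lam :: 'a :: field mat) ^\<^sub>m k = mat_of_map (sum_list lam) (jordan_shift lam k)"
proof (induction k)
  case 0
  have "mat_of_map (sum_list lam) (jordan_shift lam 0) = (1\<^sub>m (sum_list lam) :: 'a mat)"
    unfolding mat_of_map_Some[symmetric] by (rule mat_of_map_block_cong) simp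
  then show ?case by simp
next
  case (Suc k)
  have "(J_part lam :: 'a mat) ^\<^sub>m Suc k = mat_of_map (sum_list lam) (jordan_shift lam k) * J_part lam"
    using Suc by simp
  also have "\<dots> = mat_of_map (sum_list lam) (jordan_shift lam k \<circ>\<^sub>m jordan_shift lam 1)"
    unfolding J_part_eq_mat_of_map by (rule mat_of_map_mult[OF map_closed_jordan_shift])
  also have "\<dots> = mat_of_map (sum_list lam) (jordan_shift lam (Suc k))"
    by (rule mat_of_map_block_cong) (auto simp: map_comp_def)
  finally show ?case .
qed

lemma J_part_nilpotent: "(J_part lam :: 'a :: field mat) ^\<^sub>m sum_list lam = 0\<^sub>m (sum_list lam) (sum_list lam)"
proof -
  have "lam ! i \<le> sum_list lam" if "i < length lam" for i
    using that by (intro member_le_sum_list) simp_all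
  then have "mat_of_map (sum_list lam) (jordan_shift lam (sum_list lam)) = mat_of_map (sum_list lam) Map.empty"
    by (intro mat_of_map_block_cong) fastforce
  then show ?thesis by (simp add: J_part_pow mat_of_map_empty)
qed

lemma J_part_mult_vec_block_idx:
  assumes "v \<in> carrier_vec (sum_list lam)" "i < length lam" "s < lam ! i"
  shows "(J_part lam *\<^sub>v v) $ block_idx lam i s = (if Suc s < lam ! i then v $ block_idx lam i (Suc s) else (0 :: 'a :: field))"
proof -
  have p: "block_idx lam i s < sum_list lam" by (rule block_idx_less[OF assms(2,3)])
  have preimage: "jordan_shift lam 1 r = Some (block_idx lam i s) \<longleftrightarrow> Suc s < lam ! i \<and> r = block_idx lam i (Suc s)"
    if "r < sum_list lam" for r
  proof -
    from that obtain x t where r: "x < length lam" "t < lam ! x" "r = block_idx lam x t"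
      by (rule block_idxE)
    have "jordan_shift lam 1 r = Some (block_idx lam i s) \<longleftrightarrow> x = i \<and> t = Suc s"
      using r block_idx_eq_iff[OF r(1) _ assms(2,3), of "t - 1"] by auto
    also have "\<dots> \<longleftrightarrow> Suc s < lam ! i \<and> r = block_idx lam i (Suc s)"
      using r block_idx_eq_iff[OF r(1,2) assms(2), of "Suc s"] by auto
    finally show ?thesis .
  qed
  show ?thesis
  proof (cases "Suc s < lam ! i")
    case True
    then show ?thesis unfolding J_part_eq_mat_of_map
      using preimage block_idx_less[OF assms(2) True]
      by (intro trans[OF mat_of_map_mult_vec_unique[OF p assms(1)]]) auto
  next
    case False
    then show ?thesis unfolding J_part_eq_mat_of_map
      using preimage by (simp add: mat_of_map_mult_vec_outside[OF p assms(1)])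
  qed
qed

lemma J_part_pow_mult_vec_top:
  assumes "y \<in> carrier_vec (sum_list lam)" "i < length lam" "s < lam ! i" "lam ! i \<le> s + m"
  shows "((J_part lam :: 'a :: field mat) ^\<^sub>m m *\<^sub>v y) $ block_idx lam i s = 0"
  unfolding J_part_pow
proof (rule mat_of_map_mult_vec_outside[OF block_idx_less[OF assms(2,3)] assms(1)])
  fix r assume "r < sum_list lam"
  then obtain x t where r: "x < length lam" "t < lam ! x" "r = block_idx lam x t"
    by (rule block_idxE)
  show "jordan_shift lam m r \<noteq> Some (block_idx lam i s)"
    using r assms(3,4) block_idx_eq_iff[OF r(1) _ assms(2,3), of "t - m"] by auto
qed

definition gen_idx :: "nat list \<Rightarrow> nat \<Rightarrow> nat" where
  "gen_idx lam i = block_idx lam i (lam ! i - 1)"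

lemma jordan_gen_eq_unit_vec:
  "i < length lam \<Longrightarrow> 0 < lam ! i \<Longrightarrow> jordan_gen n lam i = unit_vec n (gen_idx lam i)"
  by (simp add: jordan_gen_def gen_idx_def block_idx_def take_Suc_conv_app_nth)

lemma u_vec_carrier: "u_vec n lam q \<in> carrier_vec n"
  by (simp add: u_vec_def jordan_gen_def)

lemma J_part_pow_mult_gen:
  assumes "i < length lam" "0 < lam ! i"
  shows "(J_part lam :: 'a :: field mat) ^\<^sub>m k *\<^sub>v unit_vec (sum_list lam) (gen_idx lam i) =
    (if k < lam ! i then unit_vec (sum_list lam) (block_idx lam i (lam ! i - 1 - k)) else 0\<^sub>v (sum_list lam))"
  using assms by (auto simp: J_part_pow mat_of_map_mult_unit_vec map_closed_jordan_shift gen_idx_def block_idx_less)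

lemma sorted_nth_length_filter_greater:
  assumes "sorted_wrt (\<ge>) lam" "b \<in> set lam"
  shows "length (filter (\<lambda>a. b < a) lam) < length lam \<and> lam ! length (filter (\<lambda>a. b < a) lam) = (b :: nat)"
  using assms
proof (induction lam)
  case (Cons a lam)
  show ?case
  proof (cases "b = a")
    case True
    then have "filter (\<lambda>x. b < x) lam = []" using Cons.prems by (auto simp: filter_empty_conv)
    then show ?thesis using True by simp
  next
    case False
    then have "b \<in> set lam" "b < a" using Cons.prems by auto
    then show ?thesis using Cons by simp
  qed
qed simp

lemma enh_q_le_length: "q \<in> enh_q lam \<Longrightarrow> q \<le> length lam"
  unfolding enh_q_def by (auto intro: length_filter_le)

lemma enh_q_nth:
  assumes "is_partition n lam" "q \<in> enh_q lam" "q < length lam"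
  shows "q = length (filter (\<lambda>a. lam ! q < a) lam)"
proof -
  obtain b where "b \<in> set lam" and q: "q = length (filter (\<lambda>a. b < a) lam)"
    using assms(2,3) unfolding enh_q_def by auto
  with sorted_nth_length_filter_greater[of lam b] assms(1) have "lam ! q = b"
    by (simp add: is_partition_def)
  with q show ?thesis by simp
qed

lemma enh_q_first_of_size:
  assumes "is_partition n lam" "i < length lam"
  defines "q \<equiv> length (filter (\<lambda>a. lam ! i < a) lam)"
  shows "q \<in> enh_q lam" "q < length lam" "lam ! q = lam ! i"
    and "\<And>k. i \<le> k \<Longrightarrow> k < length lam \<Longrightarrow> lam ! k \<le> lam ! q"
proof -
  have sorted: "sorted_wrt (\<ge>) lam" using assms(1) by (simp add: is_partition_def)
  show "q \<in> enh_q lam" unfolding enh_q_def q_def using nth_mem[OF assms(2)] by blast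
  show "q < length lam" "lam ! q = lam ! i"
    using sorted_nth_length_filter_greater[OF sorted, of "lam ! i"] assms(2) by (simp_all add: q_def)
  then show "lam ! k \<le> lam ! q" if "i \<le> k" "k < length lam" for k
    using sorted_wrt_nth_less[OF sorted _ that(2), of i] that by (cases "i = k") auto
qed

definition enh_block_size :: "nat list \<Rightarrow> nat \<Rightarrow> nat" where
  "enh_block_size lam q = (if q < length lam then lam ! q else 0)"

lemma enh_block_size_inj:
  assumes "is_partition n lam" "q \<in> enh_q lam" "p \<in> enh_q lam"
    and "enh_block_size lam q = enh_block_size lam p"
  shows "q = p"
proof -
  have pos: "0 < lam ! i" if "i < length lam" for i
    using assms(1) that by (auto simp: is_partition_def)
  show ?thesis
    using assms(4) enh_q_nth[OF assms(1,2)] enh_q_nth[OF assms(1,3)] pos[of q] pos[of p]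
      enh_q_le_length[OF assms(2)] enh_q_le_length[OF assms(3)]
    by (auto simp: enh_block_size_def split: if_splits)
qed

section \<open>Orbits of the enhanced group\<close>

lemma mult_mat_vec_uminus:
  "A \<in> carrier_mat nr nc \<Longrightarrow> v \<in> carrier_vec nc \<Longrightarrow> A *\<^sub>v (- v) = - (A *\<^sub>v (v :: 'a :: ring vec))"
  by (intro eq_vecI) auto

lemma mult_mat_vec_zero: "A \<in> carrier_mat nr nc \<Longrightarrow> A *\<^sub>v 0\<^sub>v nc = (0\<^sub>v nr :: 'a :: semiring_0 vec)"
  by (intro eq_vecI) auto

lemma similar_mat_wit_mult_vec:
  assumes "similar_mat_wit A B P Q" "v \<in> carrier_vec (dim_row A)"
  shows "A *\<^sub>v (P *\<^sub>v v) = P *\<^sub>v (B *\<^sub>v v)"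
proof -
  obtain n where n: "n = dim_row A" by simp
  note wit = similar_mat_witD[OF n assms(1)]
  have v: "v \<in> carrier_vec n" using assms(2) n by simp
  have "A * P = P * B * Q * P" using wit(3) by simp
  also have "\<dots> = P * B * (Q * P)" using assoc_mult_mat[OF mult_carrier_mat[OF wit(6,5)] wit(7,6)] .
  finally have AP: "A * P = P * B" using wit(2) right_mult_one_mat[OF mult_carrier_mat[OF wit(6,5)]] by simp
  have "A *\<^sub>v (P *\<^sub>v v) = (A * P) *\<^sub>v v" by (rule assoc_mult_mat_vec[OF wit(4,6) v, symmetric])
  also have "\<dots> = P *\<^sub>v (B *\<^sub>v v)" unfolding AP by (rule assoc_mult_mat_vec[OF wit(6,5) v])
  finally show ?thesis .
qed

lemma mem_enh_orbit_iff:
  assumes "X \<in> carrier_mat n n"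
  shows "(Y, u) \<in> enh_orbit n (X, w) \<longleftrightarrow>
    (\<exists>g h v. similar_mat_wit Y X g h \<and> v \<in> carrier_vec n \<and> u = - (Y *\<^sub>v v) + g *\<^sub>v w)"
proof
  assume "(Y, u) \<in> enh_orbit n (X, w)"
  then obtain g h v where g: "g \<in> carrier_mat n n" and h: "h \<in> carrier_mat n n"
    and "g * h = 1\<^sub>m n" "h * g = 1\<^sub>m n" "v \<in> carrier_vec n" "Y = g * X * h" "u = - (Y *\<^sub>v v) + g *\<^sub>v w"
    unfolding enh_orbit_def by auto
  moreover have "similar_mat_wit Y X g h"
    by (rule similar_mat_witI) (use calculation mult_carrier_mat[OF mult_carrier_mat[OF g assms] h] assms in simp_all)
  ultimately show "\<exists>g h v. similar_mat_wit Y X g h \<and> v \<in> carrier_vec n \<and> u = - (Y *\<^sub>v v) + g *\<^sub>v w"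
    by blast
next
  assume "\<exists>g h v. similar_mat_wit Y X g h \<and> v \<in> carrier_vec n \<and> u = - (Y *\<^sub>v v) + g *\<^sub>v w"
  then obtain g h v where wit: "similar_mat_wit Y X g h" and v: "v \<in> carrier_vec n"
    and u: "u = - (Y *\<^sub>v v) + g *\<^sub>v w"
    by blast
  have "dim_row Y = n"
    using similar_mat_witD(5)[OF refl wit] assms by (metis carrier_matD(1))
  note c = similar_mat_witD[OF this[symmetric] wit]
  have "(Y, u) = (g * X * h, - ((g * X * h) *\<^sub>v v) + g *\<^sub>v w)" using c(3) u by simp
  then show "(Y, u) \<in> enh_orbit n (X, w)"
    unfolding enh_orbit_def fst_conv snd_conv mem_Collect_eq
    using c(1,2,6,7) v by (intro exI[of _ g] exI[of _ h] exI[of _ v] conjI)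
qed

lemma enh_orbit_conj:
  assumes "similar_mat_wit Y X g h" "X \<in> carrier_mat n n" "w \<in> carrier_vec n"
  shows "(Y, g *\<^sub>v w) \<in> enh_orbit n (X, w)"
proof -
  note c = similar_mat_witD2[OF assms(2) similar_mat_wit_sym[OF assms(1)]]
  have "Y *\<^sub>v 0\<^sub>v n = 0\<^sub>v n" by (rule mult_mat_vec_zero[OF c(5)])
  then have "g *\<^sub>v w = - (Y *\<^sub>v 0\<^sub>v n) + g *\<^sub>v w"
    using mult_mat_vec_carrier[OF c(7) assms(3)] by simp
  then show ?thesis unfolding mem_enh_orbit_iff[OF assms(2)] using assms(1) zero_carrier_vec by blast
qed

lemma enh_orbit_translate:
  assumes "X \<in> carrier_mat n n" "w \<in> carrier_vec n" "v \<in> carrier_vec n"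
  shows "(X, - (X *\<^sub>v v) + w) \<in> enh_orbit n (X, w)"
proof -
  have "- (X *\<^sub>v v) + w = - (X *\<^sub>v v) + 1\<^sub>m n *\<^sub>v w" using assms(2) by simp
  then show ?thesis
    unfolding mem_enh_orbit_iff[OF assms(1)] using similar_mat_wit_refl[OF assms(1)] assms(3) by blast
qed

lemma enh_orbit_refl:
  assumes "X \<in> carrier_mat n n" "w \<in> carrier_vec n"
  shows "(X, w) \<in> enh_orbit n (X, w)"
  using enh_orbit_conj[OF similar_mat_wit_refl[OF assms(1)] assms] assms(2) by simp

lemma enh_orbit_carrier:
  assumes "(Y, u) \<in> enh_orbit n (X, w)" "X \<in> carrier_mat n n" "w \<in> carrier_vec n"
  shows "Y \<in> carrier_mat n n" "u \<in> carrier_vec n"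
proof -
  obtain g h v where wit: "similar_mat_wit Y X g h" and v: "v \<in> carrier_vec n"
    and u: "u = - (Y *\<^sub>v v) + g *\<^sub>v w"
    using assms(1) unfolding mem_enh_orbit_iff[OF assms(2)] by blast
  note c = similar_mat_witD2[OF assms(2) similar_mat_wit_sym[OF wit]]
  show "Y \<in> carrier_mat n n" by (rule c(5))
  show "u \<in> carrier_vec n" unfolding u using c(5,7) v assms(3) by simp
qed

lemma enh_orbit_sym:
  assumes "(Y, u) \<in> enh_orbit n (X, w)" "X \<in> carrier_mat n n" "w \<in> carrier_vec n"
  shows "(X, w) \<in> enh_orbit n (Y, u)"
proof -
  obtain g h v where wit: "similar_mat_wit Y X g h" and v: "v \<in> carrier_vec n"
    and u: "u = - (Y *\<^sub>v v) + g *\<^sub>v w"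
    using assms(1) unfolding mem_enh_orbit_iff[OF assms(2)] by blast
  have wit': "similar_mat_wit X Y h g" by (rule similar_mat_wit_sym[OF wit])
  note c = similar_mat_witD2[OF assms(2) wit']
  have "h *\<^sub>v (g *\<^sub>v w) = (h * g) *\<^sub>v w" by (rule assoc_mult_mat_vec[OF c(6,7) assms(3), symmetric])
  also have "\<dots> = w" using c(1) assms(3) by simp
  finally have hgw: "h *\<^sub>v (g *\<^sub>v w) = w" .
  have hYv: "h *\<^sub>v (Y *\<^sub>v v) = X *\<^sub>v (h *\<^sub>v v)"
    using similar_mat_wit_mult_vec[OF wit'] v assms(2) by simp
  have "h *\<^sub>v u = - (h *\<^sub>v (Y *\<^sub>v v)) + h *\<^sub>v (g *\<^sub>v w)"
    unfolding u using c(4-7) v assms(3)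
    by (simp add: mult_add_distrib_mat_vec[of _ n n] mult_mat_vec_uminus[of _ n n])
  then have "h *\<^sub>v u = - (X *\<^sub>v (h *\<^sub>v v)) + w" by (simp only: hgw hYv)
  then have "w = - (X *\<^sub>v (- (h *\<^sub>v v))) + h *\<^sub>v u"
    using c(4-7) v assms(2,3) by (intro eq_vecI) (auto simp: mult_mat_vec_uminus[of _ n n])
  then show ?thesis
    unfolding mem_enh_orbit_iff[OF c(5)] using wit' uminus_carrier_vec mult_mat_vec_carrier[OF c(6) v] by blast
qed

lemma enh_orbit_trans:
  assumes "(Y, u) \<in> enh_orbit n (X, w)" "(Z, z) \<in> enh_orbit n (Y, u)"
    and "X \<in> carrier_mat n n" "w \<in> carrier_vec n"
  shows "(Z, z) \<in> enh_orbit n (X, w)"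
proof -
  obtain g h v where wit: "similar_mat_wit Y X g h" and v: "v \<in> carrier_vec n"
    and u: "u = - (Y *\<^sub>v v) + g *\<^sub>v w"
    using assms(1) unfolding mem_enh_orbit_iff[OF assms(3)] by blast
  note c = similar_mat_witD2[OF assms(3) similar_mat_wit_sym[OF wit]]
  obtain g' h' v' where wit': "similar_mat_wit Z Y g' h'" and v': "v' \<in> carrier_vec n"
    and z: "z = - (Z *\<^sub>v v') + g' *\<^sub>v u"
    using assms(2) unfolding mem_enh_orbit_iff[OF c(5)] by blast
  note c' = similar_mat_witD2[OF c(5) similar_mat_wit_sym[OF wit']]
  have g'Yv: "g' *\<^sub>v (Y *\<^sub>v v) = Z *\<^sub>v (g' *\<^sub>v v)"
    using similar_mat_wit_mult_vec[OF wit', of v] v c'(5) by simp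
  have "g' *\<^sub>v u = - (g' *\<^sub>v (Y *\<^sub>v v)) + (g' * g) *\<^sub>v w"
    unfolding u using c(4-7) c'(4-7) v assms(4)
    by (simp add: mult_add_distrib_mat_vec[of _ n n] mult_mat_vec_uminus[of _ n n])
  then have "g' *\<^sub>v u = - (Z *\<^sub>v (g' *\<^sub>v v)) + (g' * g) *\<^sub>v w" by (simp only: g'Yv)
  then have "z = - (Z *\<^sub>v (v' + g' *\<^sub>v v)) + (g' * g) *\<^sub>v w"
    using c(4-7) c'(4-7) v v' assms(4) by (intro eq_vecI) (auto simp: z mult_add_distrib_mat_vec[of _ n n])
  then show ?thesis
    unfolding mem_enh_orbit_iff[OF assms(3)]
    using similar_mat_wit_trans[OF wit' wit] add_carrier_vec[OF v' mult_mat_vec_carrier[OF c'(7) v]] by blast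
qed

lemma enh_orbit_eq:
  assumes "(Y, u) \<in> enh_orbit n (X, w)" "X \<in> carrier_mat n n" "w \<in> carrier_vec n"
  shows "enh_orbit n (Y, u) = enh_orbit n (X, w)"
proof -
  note Yu = enh_orbit_carrier[OF assms]
  show ?thesis
    using enh_orbit_trans[OF assms(1) _ assms(2,3)] enh_orbit_trans[OF enh_orbit_sym[OF assms] _ Yu]
    by auto
qed

lemma enh_orbit_similar_mat:
  assumes "(Y, u) \<in> enh_orbit n (X, w)" "X \<in> carrier_mat n n"
  shows "similar_mat Y X"
  using assms(1) unfolding mem_enh_orbit_iff[OF assms(2)] similar_mat_def by blast

lemma smult_mult_mat_vec: "A \<in> carrier_mat nr nc \<Longrightarrow> v \<in> carrier_vec nc \<Longrightarrow> (c \<cdot>\<^sub>m A) *\<^sub>v v = c \<cdot>\<^sub>v (A *\<^sub>v (v :: 'a :: comm_ring vec))"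
  by (intro eq_vecI) (auto simp: scalar_prod_def sum_distrib_left ac_simps)

lemma mult_one_add_smult_idem:
  assumes T: "(T :: 'a :: field mat) \<in> carrier_mat n n" and TT: "T * T = e \<cdot>\<^sub>m T"
    and cd: "c + d + c * d * e = 0"
  shows "(1\<^sub>m n + c \<cdot>\<^sub>m T) * (1\<^sub>m n + d \<cdot>\<^sub>m T) = 1\<^sub>m n"
proof -
  have I: "1\<^sub>m n \<in> carrier_mat n n" by simp
  have cT: "c \<cdot>\<^sub>m T \<in> carrier_mat n n" and dT: "d \<cdot>\<^sub>m T \<in> carrier_mat n n" using T by auto
  have h: "1\<^sub>m n + d \<cdot>\<^sub>m T \<in> carrier_mat n n" using dT by simp
  have "(1\<^sub>m n + c \<cdot>\<^sub>m T) * (1\<^sub>m n + d \<cdot>\<^sub>m T) = 1\<^sub>m n * (1\<^sub>m n + d \<cdot>\<^sub>m T) + (c \<cdot>\<^sub>m T) * (1\<^sub>m n + d \<cdot>\<^sub>m T)"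
    by (rule add_mult_distrib_mat[OF I cT h])
  also have "(c \<cdot>\<^sub>m T) * (1\<^sub>m n + d \<cdot>\<^sub>m T) = c \<cdot>\<^sub>m (T * 1\<^sub>m n + T * (d \<cdot>\<^sub>m T))"
    by (simp add: mult_smult_assoc_mat[OF T h] mult_add_distrib_mat[OF T I dT])
  also have "T * (d \<cdot>\<^sub>m T) = d \<cdot>\<^sub>m (T * T)" by (rule mult_smult_distrib[OF T T])
  also have "1\<^sub>m n * (1\<^sub>m n + d \<cdot>\<^sub>m T) + c \<cdot>\<^sub>m (T * 1\<^sub>m n + d \<cdot>\<^sub>m (T * T)) = 1\<^sub>m n"
  proof (rule eq_matI)
    fix i j assume "i < dim_row (1\<^sub>m n :: 'a mat)" "j < dim_col (1\<^sub>m n :: 'a mat)"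
    then have ij: "i < n" "j < n" by auto
    have "c * (T $$ (i, j) + d * (e * T $$ (i, j))) + d * T $$ (i, j) = (c + d + c * d * e) * T $$ (i, j)"
      by (simp add: algebra_simps)
    then show "(1\<^sub>m n * (1\<^sub>m n + d \<cdot>\<^sub>m T) + c \<cdot>\<^sub>m (T * 1\<^sub>m n + d \<cdot>\<^sub>m (T * T))) $$ (i, j) = 1\<^sub>m n $$ (i, j)"
      using ij T unfolding TT cd by (simp add: algebra_simps)
  qed (use T in auto)
  finally show ?thesis .
qed

lemma enh_orbit_shear:
  assumes J: "(J :: 'a :: field mat) \<in> carrier_mat n n" and T: "T \<in> carrier_mat n n"
    and TJ: "T * J = J * T" and TT: "T * T = e \<cdot>\<^sub>m T" and ce: "1 + c * e \<noteq> 0"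
    and w: "w \<in> carrier_vec n"
  shows "(J, w + c \<cdot>\<^sub>v (T *\<^sub>v w)) \<in> enh_orbit n (J, w)"
proof -
  define d where "d = - c / (1 + c * e)"
  have cd: "c + d + c * d * e = 0" "d + c + d * c * e = 0" using ce unfolding d_def by (auto simp: field_simps)
  define g where "g = 1\<^sub>m n + c \<cdot>\<^sub>m T"
  define h where "h = 1\<^sub>m n + d \<cdot>\<^sub>m T"
  have g: "g \<in> carrier_mat n n" and h: "h \<in> carrier_mat n n" using T by (auto simp: g_def h_def)
  have gh: "g * h = 1\<^sub>m n" "h * g = 1\<^sub>m n"
    unfolding g_def h_def by (rule mult_one_add_smult_idem[OF T TT cd(1)], rule mult_one_add_smult_idem[OF T TT cd(2)])
  have cT: "c \<cdot>\<^sub>m T \<in> carrier_mat n n" using T by simp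
  have "g * J = J + c \<cdot>\<^sub>m (T * J)"
    unfolding g_def using J T by (simp add: add_mult_distrib_mat[OF _ cT J] mult_smult_assoc_mat[OF T J])
  also have "\<dots> = J * g"
    unfolding g_def TJ using J T by (simp add: mult_add_distrib_mat[OF J _ cT] mult_smult_distrib[OF J T])
  finally have "g * J = J * g" .
  then have "g * J * h = J" using J g h gh by (simp add: assoc_mult_mat[of _ n n _ n _ n])
  then have "similar_mat_wit J J g h" using J g h gh by (intro similar_mat_witI) auto
  moreover have "g *\<^sub>v w = w + c \<cdot>\<^sub>v (T *\<^sub>v w)"
    unfolding g_def using T w by (simp add: add_mult_distrib_mat_vec[of _ n n] smult_mult_mat_vec)
  ultimately show ?thesis using enh_orbit_conj[OF _ J w] by metis
qed

section \<open>Separating the orbits\<close>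

definition absorbing_exponents :: "nat \<Rightarrow> 'a :: field mat \<Rightarrow> 'a vec \<Rightarrow> nat set" where
  "absorbing_exponents n X w = {k. \<exists>y \<in> carrier_vec n. X ^\<^sub>m k *\<^sub>v w = X ^\<^sub>m Suc k *\<^sub>v y}"

lemma absorbing_exponents_mono:
  assumes "(Y, u) \<in> enh_orbit n (X, w)" "X \<in> carrier_mat n n" "w \<in> carrier_vec n"
  shows "absorbing_exponents n X w \<subseteq> absorbing_exponents n Y u"
proof
  fix k assume "k \<in> absorbing_exponents n X w"
  then obtain y where y: "y \<in> carrier_vec n" and ky: "X ^\<^sub>m k *\<^sub>v w = X ^\<^sub>m Suc k *\<^sub>v y"
    unfolding absorbing_exponents_def by blast
  obtain g h v where wit: "similar_mat_wit Y X g h" and v: "v \<in> carrier_vec n"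
    and u: "u = - (Y *\<^sub>v v) + g *\<^sub>v w"
    using assms(1) unfolding mem_enh_orbit_iff[OF assms(2)] by blast
  note c = similar_mat_witD2[OF assms(2) similar_mat_wit_sym[OF wit]]
  have Yk: "Y ^\<^sub>m k \<in> carrier_mat n n" using c(5) by simp
  have conj: "Y ^\<^sub>m m *\<^sub>v (g *\<^sub>v x) = g *\<^sub>v (X ^\<^sub>m m *\<^sub>v x)" if "x \<in> carrier_vec n" for m x
    using similar_mat_wit_mult_vec[OF similar_mat_wit_pow[OF wit, of m]] that c(5) by simp
  have YSuc: "Y ^\<^sub>m k *\<^sub>v (Y *\<^sub>v x) = Y ^\<^sub>m Suc k *\<^sub>v x" if "x \<in> carrier_vec n" for x
    using assoc_mult_mat_vec[OF Yk c(5) that] by simp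
  have "Y ^\<^sub>m k *\<^sub>v u = - (Y ^\<^sub>m k *\<^sub>v (Y *\<^sub>v v)) + Y ^\<^sub>m k *\<^sub>v (g *\<^sub>v w)"
    unfolding u using Yk c(5,7) v assms(3)
    by (simp add: mult_add_distrib_mat_vec[of _ n n] mult_mat_vec_uminus[of _ n n])
  also have "\<dots> = - (Y ^\<^sub>m Suc k *\<^sub>v v) + Y ^\<^sub>m Suc k *\<^sub>v (g *\<^sub>v y)"
    by (simp only: YSuc[OF v] conj[OF assms(3)] conj[OF y] ky)
  also have "\<dots> = Y ^\<^sub>m Suc k *\<^sub>v (- v + g *\<^sub>v y)"
    using pow_carrier_mat[OF c(5), of "Suc k"] c(7) v y
    by (simp add: mult_add_distrib_mat_vec[of _ n n] mult_mat_vec_uminus[of _ n n] del: pow_mat.simps)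
  finally show "k \<in> absorbing_exponents n Y u"
    unfolding absorbing_exponents_def using c(7) v y by auto
qed

lemma absorbing_exponents_orbit:
  assumes "(Y, u) \<in> enh_orbit n (X, w)" "X \<in> carrier_mat n n" "w \<in> carrier_vec n"
  shows "absorbing_exponents n Y u = absorbing_exponents n X w"
  using absorbing_exponents_mono[OF assms] absorbing_exponents_mono[OF enh_orbit_sym[OF assms] enh_orbit_carrier[OF assms]]
  by blast

lemma absorbing_exponents_J_part:
  assumes "\<forall>a \<in> set lam. 0 < a"
  shows "absorbing_exponents (sum_list lam) (J_part lam :: 'a :: field mat) (u_vec (sum_list lam) lam q)
    = {k. enh_block_size lam q \<le> k}"
proof (cases "q < length lam")
  case False
  then have "u_vec (sum_list lam) lam q = (0\<^sub>v (sum_list lam) :: 'a vec)" "enh_block_size lam q = 0"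
    by (auto simp: u_vec_def enh_block_size_def)
  moreover have "(J_part lam :: 'a mat) ^\<^sub>m k *\<^sub>v 0\<^sub>v (sum_list lam) = 0\<^sub>v (sum_list lam)" for k
    by (rule mult_mat_vec_zero[OF pow_carrier_mat[OF J_part_carrier]])
  ultimately show ?thesis
    unfolding absorbing_exponents_def by (auto intro!: bexI[of _ "0\<^sub>v (sum_list lam)"] simp del: pow_mat.simps)
next
  case True
  let ?n = "sum_list lam" and ?b = "lam ! q"
  have b: "0 < ?b" using True assms by simp
  have u: "u_vec ?n lam q = unit_vec ?n (gen_idx lam q)"
    using True b by (simp add: u_vec_def jordan_gen_eq_unit_vec)
  have "enh_block_size lam q = ?b" using True by (simp add: enh_block_size_def)
  moreover have "k \<in> absorbing_exponents ?n (J_part lam :: 'a mat) (u_vec ?n lam q) \<longleftrightarrow> ?b \<le> k" for k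
  proof
    assume "k \<in> absorbing_exponents ?n (J_part lam :: 'a mat) (u_vec ?n lam q)"
    then obtain y where y: "y \<in> carrier_vec ?n"
      and ky: "(J_part lam :: 'a mat) ^\<^sub>m k *\<^sub>v u_vec ?n lam q = J_part lam ^\<^sub>m Suc k *\<^sub>v y"
      unfolding absorbing_exponents_def by blast
    show "?b \<le> k"
    proof (rule ccontr)
      assume "\<not> ?b \<le> k"
      let ?p = "block_idx lam q (?b - 1 - k)"
      have p: "?p < ?n" using True b by (intro block_idx_less) auto
      have "((J_part lam :: 'a mat) ^\<^sub>m k *\<^sub>v u_vec ?n lam q) $ ?p = 1"
        using \<open>\<not> ?b \<le> k\<close> p by (simp add: u J_part_pow_mult_gen[OF True b])
      moreover have "((J_part lam :: 'a mat) ^\<^sub>m Suc k *\<^sub>v y) $ ?p = 0"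
        using \<open>\<not> ?b \<le> k\<close> True by (intro J_part_pow_mult_vec_top[OF y]) auto
      ultimately show False using ky by simp
    qed
  next
    assume "?b \<le> k"
    then have "(J_part lam :: 'a mat) ^\<^sub>m k *\<^sub>v u_vec ?n lam q = J_part lam ^\<^sub>m Suc k *\<^sub>v 0\<^sub>v ?n"
      by (simp add: u J_part_pow_mult_gen[OF True b] mult_mat_vec_zero[OF pow_carrier_mat[OF J_part_carrier]]
          del: pow_mat.simps)
    then show "k \<in> absorbing_exponents ?n (J_part lam :: 'a mat) (u_vec ?n lam q)"
      unfolding absorbing_exponents_def mem_Collect_eq by (rule bexI[OF _ zero_carrier_vec])
  qed
  ultimately show ?thesis by (simp add: set_eq_iff)
qed

lemma jordan_nf_J_part:
  "\<forall>a \<in> set lam. 0 < a \<Longrightarrow> jordan_nf (J_part lam :: 'a :: field mat) (map (\<lambda>a. (a, 0)) lam)"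
  unfolding jordan_nf_def J_part_def[symmetric] using similar_mat_refl[OF J_part_carrier] by auto

lemma similar_J_part_imp_eq:
  assumes "is_partition n lam" "is_partition n mu"
    and "similar_mat (J_part lam :: 'a :: field mat) (J_part mu)"
  shows "lam = mu"
proof -
  have pos: "\<forall>a\<in>set lam. 0 < a" "\<forall>a\<in>set mu. 0 < a" using assms(1,2) by (auto simp: is_partition_def)
  have jnf_lam: "jordan_nf (J_part lam :: 'a mat) (map (\<lambda>a. (a, 0)) lam)" by (rule jordan_nf_J_part[OF pos(1)])
  have jnf_mu: "jordan_nf (J_part lam :: 'a mat) (map (\<lambda>a. (a, 0)) mu)"
    using assms(3) jordan_nf_J_part[OF pos(2)] similar_mat_trans unfolding jordan_nf_def by blast
  have count: "length (filter ((=) (k, 0 :: 'a)) (map (\<lambda>a. (a, 0)) xs)) = count_list xs k" for k and xs :: "nat list"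
    by (induction xs) auto
  have "count_list lam k = count_list mu k" for k
  proof (cases "k = 0")
    case True
    moreover have "0 \<notin> set lam" "0 \<notin> set mu" using pos by auto
    ultimately show ?thesis by (simp add: count_notin)
  next
    case False
    then show ?thesis
      using compute_nr_of_jordan_blocks[OF jnf_lam False, of 0] compute_nr_of_jordan_blocks[OF jnf_mu False, of 0]
      unfolding count by simp
  qed
  then have "mset (rev lam) = mset (rev mu)" by (intro multiset_eqI) (simp add: count_mset)
  moreover have "sorted (rev lam)" "sorted (rev mu)"
    using assms(1,2) by (auto simp: is_partition_def sorted_wrt_rev)
  ultimately show ?thesis by (metis properties_for_sort rev_rev_ident sorted_sort_id)
qed

lemma O_enh_inj:
  assumes "(lam, q) \<in> enhanced_partitions n" "(mu, p) \<in> enhanced_partitions n"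
    and "(O_enh n lam q :: ('a :: field mat \<times> 'a vec) set) = O_enh n mu p"
  shows "lam = mu \<and> q = p"
proof -
  have lam: "is_partition n lam" "q \<in> enh_q lam" and mu: "is_partition n mu" "p \<in> enh_q mu"
    using assms(1,2) by (auto simp: enhanced_partitions_def)
  have n: "n = sum_list lam" "n = sum_list mu" using lam mu by (auto simp: is_partition_def)
  have J: "(J_part lam :: 'a mat) \<in> carrier_mat n n" "(J_part mu :: 'a mat) \<in> carrier_mat n n"
    using J_part_carrier n by auto
  have "(J_part mu, u_vec n mu p) \<in> (O_enh n mu p :: ('a mat \<times> 'a vec) set)"
    unfolding O_enh_def by (rule enh_orbit_refl[OF J(2) u_vec_carrier])
  then have orb: "(J_part mu, u_vec n mu p) \<in> enh_orbit n (J_part lam :: 'a mat, u_vec n lam q)"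
    using assms(3) by (simp add: O_enh_def)
  have "lam = mu"
    by (rule similar_J_part_imp_eq[OF lam(1) mu(1) similar_mat_sym[OF enh_orbit_similar_mat[OF orb J(1)]]])
  moreover have "absorbing_exponents n (J_part lam :: 'a mat) (u_vec n lam p)
      = absorbing_exponents n (J_part lam :: 'a mat) (u_vec n lam q)"
    using absorbing_exponents_orbit[OF orb J(1) u_vec_carrier] \<open>lam = mu\<close> by simp
  then have "{k. enh_block_size lam p \<le> k} = {k. enh_block_size lam q \<le> k}"
    using lam(1) n(1) by (simp add: is_partition_def absorbing_exponents_J_part)
  then have "enh_block_size lam p = enh_block_size lam q" by (metis mem_Collect_eq order_refl le_antisym)
  ultimately show ?thesis using enh_block_size_inj[OF lam(1)] lam(2) mu(2) by metis
qed

section \<open>A normal form for the vector\<close>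

text \<open>The vector \<open>\<Sum>\<^sub>i c i \<cdot> v\<^sub>i\<close>, where \<open>v\<^sub>i\<close> generates the \<open>i\<close>-th Jordan block.\<close>

definition gen_comb :: "nat list \<Rightarrow> (nat \<Rightarrow> 'a) \<Rightarrow> 'a :: field vec" where
  "gen_comb lam c =
     vec (sum_list lam) (\<lambda>p. case block_coord lam p of (i, s) \<Rightarrow> if s = lam ! i - 1 then c i else 0)"

lemma gen_comb_carrier[simp]: "gen_comb lam c \<in> carrier_vec (sum_list lam)"
  by (simp add: gen_comb_def)

lemma gen_comb_dim[simp]: "dim_vec (gen_comb lam c) = sum_list lam"
  by (simp add: gen_comb_def)

lemma gen_comb_block_idx:
  "i < length lam \<Longrightarrow> s < lam ! i \<Longrightarrow> gen_comb lam c $ block_idx lam i s = (if s = lam ! i - 1 then c i else 0)"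
  by (simp add: gen_comb_def block_idx_less)

lemma gen_comb_cong: "(\<And>k. k < length lam \<Longrightarrow> c k = c' k) \<Longrightarrow> gen_comb lam c = gen_comb lam c'"
  by (rule vec_eq_blockI[where lam = lam]) (auto simp: gen_comb_block_idx)

lemma gen_comb_add_smult: "gen_comb lam c + x \<cdot>\<^sub>v gen_comb lam c' = gen_comb lam (\<lambda>k. c k + x * c' k)"
  by (rule vec_eq_blockI[where lam = lam]) (auto simp: gen_comb_block_idx block_idx_less)

lemma u_vec_eq_gen_comb:
  assumes "\<forall>a \<in> set lam. 0 < a" "q \<le> length lam"
  shows "u_vec (sum_list lam) lam q = gen_comb lam (\<lambda>k. if k = q then 1 else 0)"
proof (cases "q < length lam")
  case True
  then have b: "0 < lam ! q" using assms(1) by simp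
  show ?thesis
  proof (rule vec_eq_blockI[where lam = lam])
    fix i s assume i: "i < length lam" "s < lam ! i"
    then show "u_vec (sum_list lam) lam q $ block_idx lam i s = gen_comb lam (\<lambda>k. if k = q then 1 else 0) $ block_idx lam i s"
      using True b block_idx_eq_iff[OF i True, of "lam ! q - 1"] block_idx_less[OF i]
      by (auto simp: u_vec_def jordan_gen_eq_unit_vec gen_idx_def gen_comb_block_idx block_idx_less)
  qed (simp_all add: u_vec_carrier)
next
  case False
  then show ?thesis
    by (intro vec_eq_blockI[where lam = lam]) (auto simp: u_vec_def gen_comb_block_idx block_idx_less)
qed

lemma enh_orbit_gen_comb:
  assumes "w \<in> carrier_vec (sum_list lam)"
  shows "(J_part lam, gen_comb lam (\<lambda>i. w $ gen_idx lam i)) \<in> enh_orbit (sum_list lam) (J_part lam :: 'a :: field mat, w)"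
proof -
  let ?n = "sum_list lam"
  txt \<open>\<open>J v\<close> agrees with \<open>w\<close> except at the block tops.\<close>
  define v :: "'a vec" where
    "v = vec ?n (\<lambda>p. case block_coord lam p of (i, s) \<Rightarrow> if s = 0 then 0 else w $ block_idx lam i (s - 1))"
  have v: "v \<in> carrier_vec ?n" by (simp add: v_def)
  have "- (J_part lam *\<^sub>v v) + w = gen_comb lam (\<lambda>i. w $ gen_idx lam i)"
  proof (rule vec_eq_blockI[where lam = lam])
    fix i s assume i: "i < length lam" "s < lam ! i"
    have "(J_part lam *\<^sub>v v) $ block_idx lam i s = (if Suc s < lam ! i then w $ block_idx lam i s else 0)"
      unfolding J_part_mult_vec_block_idx[OF v i] using i by (simp add: v_def block_idx_less)
    then show "(- (J_part lam *\<^sub>v v) + w) $ block_idx lam i s = gen_comb lam (\<lambda>i. w $ gen_idx lam i) $ block_idx lam i s"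
      using block_idx_less[OF i] assms i by (auto simp: gen_comb_block_idx gen_idx_def)
  qed (use mult_mat_vec_carrier[OF J_part_carrier v] assms in auto)
  then show ?thesis using enh_orbit_translate[OF J_part_carrier assms v] by simp
qed

text \<open>
  Maps block \<open>j\<close> onto block \<open>i\<close> with the tops (generators) aligned; for \<open>lam ! i \<le> lam ! j\<close> it
  commutes with the Jordan shift.
\<close>

definition block_shift_map :: "nat list \<Rightarrow> nat \<Rightarrow> nat \<Rightarrow> nat \<rightharpoonup> nat" where
  "block_shift_map lam i j r = (case block_coord lam r of (x, s) \<Rightarrow>
     if x = j \<and> lam ! j - lam ! i \<le> s then Some (block_idx lam i (s - (lam ! j - lam ! i))) else None)"

lemma block_shift_map_block_idx:
  "x < length lam \<Longrightarrow> s < lam ! x \<Longrightarrow> block_shift_map lam i j (block_idx lam x s) =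
     (if x = j \<and> lam ! j - lam ! i \<le> s then Some (block_idx lam i (s - (lam ! j - lam ! i))) else None)"
  by (simp add: block_shift_map_def)

context
  fixes lam :: "nat list" and i j :: nat
  assumes ij: "i < length lam" "j < length lam" "lam ! i \<le> lam ! j"
begin

lemma block_shift_map_target:
  "s < lam ! j \<Longrightarrow> lam ! j - lam ! i \<le> s \<Longrightarrow> s - (lam ! j - lam ! i) < lam ! i"
  using ij by arith

lemma map_closed_block_shift_map: "map_closed (sum_list lam) (block_shift_map lam i j)"
  by (rule map_closed_blockI)
    (use ij block_shift_map_target in \<open>auto simp: block_shift_map_block_idx block_idx_less split: if_splits\<close>)

lemma block_shift_mat_commute:
  "(mat_of_map (sum_list lam) (block_shift_map lam i j) :: 'a :: field mat) * J_part lam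
    = J_part lam * mat_of_map (sum_list lam) (block_shift_map lam i j)"
  unfolding J_part_eq_mat_of_map mat_of_map_mult[OF map_closed_jordan_shift]
    mat_of_map_mult[OF map_closed_block_shift_map]
proof (rule mat_of_map_block_cong)
  fix x s assume xs: "x < length lam" "s < lam ! x"
  then show "(block_shift_map lam i j \<circ>\<^sub>m jordan_shift lam 1) (block_idx lam x s)
    = (jordan_shift lam 1 \<circ>\<^sub>m block_shift_map lam i j) (block_idx lam x s)"
    using ij block_shift_map_target
    by (auto simp: map_comp_def block_shift_map_block_idx split: option.splits if_splits)
qed

lemma block_shift_mat_square:
  "(mat_of_map (sum_list lam) (block_shift_map lam i j) :: 'a :: field mat) * mat_of_map (sum_list lam) (block_shift_map lam i j)
    = (if i = j then 1 else 0) \<cdot>\<^sub>m mat_of_map (sum_list lam) (block_shift_map lam i j)"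
proof -
  have "(mat_of_map (sum_list lam) (block_shift_map lam i j) :: 'a mat) * mat_of_map (sum_list lam) (block_shift_map lam i j)
      = mat_of_map (sum_list lam) (if i = j then block_shift_map lam i j else Map.empty)"
    unfolding mat_of_map_mult[OF map_closed_block_shift_map]
  proof (rule mat_of_map_block_cong)
    fix x s assume "x < length lam" "s < lam ! x"
    then show "(block_shift_map lam i j \<circ>\<^sub>m block_shift_map lam i j) (block_idx lam x s)
      = (if i = j then block_shift_map lam i j else Map.empty) (block_idx lam x s)"
      using ij block_shift_map_target by (auto simp: map_comp_def block_shift_map_def)
  qed
  then show ?thesis by (auto simp: mat_of_map_empty intro!: eq_matI)
qed

lemma block_shift_mat_mult_gen_comb:
  assumes "0 < lam ! i"
  shows "mat_of_map (sum_list lam) (block_shift_map lam i j) *\<^sub>v gen_comb lam c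
    = (gen_comb lam (\<lambda>k. if k = i then c j else 0) :: 'a :: field vec)"
proof (rule vec_eq_blockI[where lam = lam])
  fix x s assume xs: "x < length lam" "s < lam ! x"
  let ?d = "lam ! j - lam ! i"
  have p: "block_idx lam x s < sum_list lam" by (rule block_idx_less[OF xs])
  have sd: "s + ?d < lam ! j" if "x = i"
  proof -
    have "s < lam ! i" using xs that by simp
    then show ?thesis using ij by arith
  qed
  have preimage: "block_shift_map lam i j r = Some (block_idx lam x s) \<longleftrightarrow> x = i \<and> r = block_idx lam j (s + ?d)"
    if "r < sum_list lam" for r
  proof -
    from that obtain y t where r: "y < length lam" "t < lam ! y" "r = block_idx lam y t"
      by (rule block_idxE)
    show ?thesis
      using r xs ij sd block_shift_map_target[of t] block_idx_eq_iff[OF ij(1) _ xs, of "t - ?d"]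
        block_idx_eq_iff[OF r(1,2) ij(2), of "s + ?d"]
      by (auto simp: block_shift_map_block_idx)
  qed
  show "(mat_of_map (sum_list lam) (block_shift_map lam i j) *\<^sub>v gen_comb lam c) $ block_idx lam x s
      = gen_comb lam (\<lambda>k. if k = i then c j else 0) $ block_idx lam x s"
  proof (cases "x = i")
    case True
    note sd = sd[OF True]
    have "(mat_of_map (sum_list lam) (block_shift_map lam i j) *\<^sub>v gen_comb lam c) $ block_idx lam x s
        = gen_comb lam c $ block_idx lam j (s + ?d)"
      using preimage True block_idx_less[OF ij(2) sd]
      by (intro mat_of_map_mult_vec_unique[OF p gen_comb_carrier]) auto
    then show ?thesis using True xs sd ij assms by (auto simp: gen_comb_block_idx)
  next
    case False
    then show ?thesis
      using preimage xs by (simp add: mat_of_map_mult_vec_outside[OF p gen_comb_carrier] gen_comb_block_idx)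
  qed
qed (simp_all add: mult_mat_vec_carrier[OF mat_of_map_carrier gen_comb_carrier])

end

definition gen_comb_reach :: "nat list \<Rightarrow> (nat \<Rightarrow> 'a :: field) \<Rightarrow> (nat \<Rightarrow> 'a) \<Rightarrow> bool" where
  "gen_comb_reach lam c c' \<longleftrightarrow>
     (J_part lam, gen_comb lam c') \<in> enh_orbit (sum_list lam) (J_part lam, gen_comb lam c)"

lemma gen_comb_reach_refl: "gen_comb_reach lam c c"
  unfolding gen_comb_reach_def by (rule enh_orbit_refl[OF J_part_carrier gen_comb_carrier])

lemma gen_comb_reach_trans[trans]: "gen_comb_reach lam c c' \<Longrightarrow> gen_comb_reach lam c' c'' \<Longrightarrow> gen_comb_reach lam c c''"
  unfolding gen_comb_reach_def by (rule enh_orbit_trans[OF _ _ J_part_carrier gen_comb_carrier])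

lemma gen_comb_reach_cong:
  "gen_comb_reach lam c c' \<Longrightarrow> (\<And>k. k < length lam \<Longrightarrow> c' k = c'' k) \<Longrightarrow> gen_comb_reach lam c c''"
  unfolding gen_comb_reach_def by (metis gen_comb_cong)

lemma gen_comb_reach_add:
  assumes "\<forall>a \<in> set lam. 0 < a" "i < length lam" "j < length lam" "lam ! i \<le> lam ! j"
    and "i = j \<Longrightarrow> 1 + x \<noteq> (0 :: 'a :: field)"
  shows "gen_comb_reach lam c (c(i := c i + x * c j))"
proof -
  let ?M = "mat_of_map (sum_list lam) (block_shift_map lam i j) :: 'a mat"
  have "1 + x * (if i = j then 1 else 0) \<noteq> 0" using assms(5) by auto
  from enh_orbit_shear[OF J_part_carrier mat_of_map_carrier block_shift_mat_commute[OF assms(2-4)]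
      block_shift_mat_square[OF assms(2-4)] this gen_comb_carrier]
  have "(J_part lam, gen_comb lam c + x \<cdot>\<^sub>v (?M *\<^sub>v gen_comb lam c))
      \<in> enh_orbit (sum_list lam) (J_part lam, gen_comb lam c)" .
  also have "gen_comb lam c + x \<cdot>\<^sub>v (?M *\<^sub>v gen_comb lam c) = gen_comb lam (c(i := c i + x * c j))"
    using assms(1,2) by (auto simp: block_shift_mat_mult_gen_comb[OF assms(2-4)] gen_comb_add_smult intro: gen_comb_cong)
  finally show ?thesis unfolding gen_comb_reach_def .
qed

lemma gen_comb_reach_scale:
  assumes "\<forall>a \<in> set lam. 0 < a" "i < length lam" "y \<noteq> (0 :: 'a :: field)"
  shows "gen_comb_reach lam c (c(i := y * c i))"
proof -
  have "c i + (y - 1) * c i = y * c i" by (simp add: algebra_simps)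
  then show ?thesis using gen_comb_reach_add[OF assms(1,2,2) order_refl, of "y - 1" c] assms(3) by simp
qed

lemma gen_comb_reach_clear:
  assumes pos: "\<forall>a \<in> set lam. 0 < a" and q: "q < length lam" and cq: "c q \<noteq> (0 :: 'a :: field)"
    and dom: "\<forall>k < length lam. c k \<noteq> 0 \<longrightarrow> lam ! k \<le> lam ! q"
  shows "gen_comb_reach lam c (\<lambda>k. if k = q then c q else 0)"
proof -
  have "gen_comb_reach lam c (\<lambda>k. if k \<in> S then 0 else c k)"
    if "finite S" "S \<subseteq> {..<length lam}" "q \<notin> S" for S
    using that
  proof (induction S rule: finite_induct)
    case empty
    then show ?case by (simp add: gen_comb_reach_refl)
  next
    case (insert i S)
    let ?cS = "\<lambda>k. if k \<in> S then 0 else c k"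
    have IH: "gen_comb_reach lam c ?cS" using insert by simp
    have i: "i < length lam" "i \<noteq> q" using insert.prems by auto
    show ?case
    proof (cases "c i = 0")
      case True
      then have "(\<lambda>k. if k \<in> insert i S then 0 else c k) = ?cS" by auto
      with IH show ?thesis by simp
    next
      case False
      then have "lam ! i \<le> lam ! q" using dom i by simp
      from gen_comb_reach_add[OF pos i(1) q this, of "- (c i / c q)" ?cS] i(2)
      have "gen_comb_reach lam ?cS (?cS(i := ?cS i + - (c i / c q) * ?cS q))" by simp
      also have "?cS(i := ?cS i + - (c i / c q) * ?cS q) = (\<lambda>k. if k \<in> insert i S then 0 else c k)"
        using insert.hyps insert.prems cq by (auto simp: fun_eq_iff)
      finally show ?thesis using gen_comb_reach_trans[OF IH] by simp
    qed
  qed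
  from this[of "{..<length lam} - {q}"]
  show ?thesis by (rule gen_comb_reach_cong) auto
qed

lemma gen_comb_reach_normal_form:
  assumes "is_partition n lam"
  shows "\<exists>q \<in> enh_q lam. gen_comb_reach lam c (\<lambda>k. if k = q then 1 else (0 :: 'a :: field))"
proof (cases "\<forall>k < length lam. c k = 0")
  case True
  have "length lam \<in> enh_q lam" by (simp add: enh_q_def)
  moreover have "gen_comb_reach lam c (\<lambda>k. if k = length lam then 1 else 0)"
    using True by (intro gen_comb_reach_cong[OF gen_comb_reach_refl]) auto
  ultimately show ?thesis by blast
next
  case False
  have pos: "\<forall>a \<in> set lam. 0 < a" using assms by (simp add: is_partition_def)
  define i0 where "i0 = (LEAST k. k < length lam \<and> c k \<noteq> 0)"
  have i0: "i0 < length lam" "c i0 \<noteq> 0" and i0_le: "\<And>k. k < length lam \<Longrightarrow> c k \<noteq> 0 \<Longrightarrow> i0 \<le> k"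
    using False LeastI_ex[of "\<lambda>k. k < length lam \<and> c k \<noteq> 0"] Least_le[of "\<lambda>k. k < length lam \<and> c k \<noteq> 0"]
    unfolding i0_def by auto
  txt \<open>\<open>q\<close> is the first block of the size of \<open>i\<^sub>0\<close>; no block carrying a coefficient is larger.\<close>
  define q where "q = length (filter (\<lambda>a. lam ! i0 < a) lam)"
  note q = enh_q_first_of_size[OF assms i0(1), folded q_def]
  have dom: "\<forall>k < length lam. c k \<noteq> 0 \<longrightarrow> lam ! k \<le> lam ! q" using q(4) i0_le by blast
  obtain c1 where c1: "gen_comb_reach lam c c1" "c1 q \<noteq> 0"
    and dom1: "\<forall>k < length lam. c1 k \<noteq> 0 \<longrightarrow> lam ! k \<le> lam ! q"
  proof (cases "c q = 0")
    case True
    then have "q \<noteq> i0" using i0(2) by auto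
    with gen_comb_reach_add[OF pos q(2) i0(1) _, of 1 c] q(3)
    have "gen_comb_reach lam c (c(q := c q + 1 * c i0))" by simp
    moreover have "\<forall>k < length lam. (c(q := c q + 1 * c i0)) k \<noteq> 0 \<longrightarrow> lam ! k \<le> lam ! q" using dom by simp
    ultimately show ?thesis using that True i0(2) by simp
  qed (use that gen_comb_reach_refl dom in blast)
  have "gen_comb_reach lam c1 (\<lambda>k. if k = q then c1 q else 0)"
    by (rule gen_comb_reach_clear[OF pos q(2) c1(2) dom1])
  also have "gen_comb_reach lam \<dots> ((\<lambda>k. if k = q then c1 q else 0)(q := 1 / c1 q * c1 q))"
    using gen_comb_reach_scale[OF pos q(2), of "1 / c1 q" "\<lambda>k. if k = q then c1 q else 0"] c1(2) by simp
  finally have "gen_comb_reach lam c (\<lambda>k. if k = q then 1 else 0)"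
    by (rule gen_comb_reach_cong[OF gen_comb_reach_trans[OF c1(1)]]) (use c1(2) in auto)
  with q(1) show ?thesis by blast
qed

lemma enh_orbit_J_part_normal_form:
  assumes "is_partition n lam" "w \<in> carrier_vec n"
  shows "\<exists>q \<in> enh_q lam. (J_part lam, u_vec n lam q) \<in> enh_orbit n (J_part lam :: 'a :: field mat, w)"
proof -
  have pos: "\<forall>a \<in> set lam. 0 < a" and n: "n = sum_list lam" using assms(1) by (auto simp: is_partition_def)
  let ?c = "\<lambda>i. w $ gen_idx lam i"
  obtain q where q: "q \<in> enh_q lam" and reach: "gen_comb_reach lam ?c (\<lambda>k. if k = q then 1 else (0 :: 'a))"
    using gen_comb_reach_normal_form[OF assms(1)] by blast
  have "(J_part lam, gen_comb lam ?c) \<in> enh_orbit n (J_part lam :: 'a mat, w)"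
    using enh_orbit_gen_comb[of w lam] assms(2) n by simp
  moreover have "(J_part lam, u_vec n lam q) \<in> enh_orbit n (J_part lam, gen_comb lam ?c)"
    using reach n u_vec_eq_gen_comb[OF pos enh_q_le_length[OF q], where 'a = 'a] by (simp add: gen_comb_reach_def)
  ultimately have "(J_part lam, u_vec n lam q) \<in> enh_orbit n (J_part lam :: 'a mat, w)"
    using enh_orbit_trans J_part_carrier assms(2) n by metis
  with q show ?thesis by blast
qed

section \<open>Nilpotent matrices are similar to Jordan matrices\<close>

lemma det_pow: "A \<in> carrier_mat n n \<Longrightarrow> det (A ^\<^sub>m k) = det A ^ k"
  by (induction k) (simp_all add: det_mult[of _ n])

lemma nilpotent_kernel_vec:
  assumes X: "(X :: 'a :: field mat) \<in> carrier_mat n n" and nil: "X ^\<^sub>m k = 0\<^sub>m n n" and n: "0 < n"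
  obtains v where "v \<in> carrier_vec n" "v \<noteq> 0\<^sub>v n" "X *\<^sub>v v = 0\<^sub>v n"
proof -
  have "det X ^ k = 0" using det_pow[OF X, of k] nil n by simp
  then have "det X = 0" by simp
  then show ?thesis using that det_0_iff_vec_prod_zero_field[OF X] by blast
qed

lemma invertible_mat_first_col:
  assumes v: "(v :: 'a :: field vec) \<in> carrier_vec n" "v \<noteq> 0\<^sub>v n"
  obtains P Q where "P \<in> carrier_mat n n" "Q \<in> carrier_mat n n" "P * Q = 1\<^sub>m n" "Q * P = 1\<^sub>m n" "col P 0 = v"
proof -
  obtain l where l: "l < n" "v $ l \<noteq> 0"
    using v by (metis eq_vecI carrier_vecD index_zero_vec)
  then have n: "0 < n" by simp
  txt \<open>Swap a nonzero entry of \<open>v\<close> to the front, then complete by the identity to a lower triangular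
    matrix.\<close>
  let ?t = "Transposition.transpose 0 l"
  define S :: "'a mat" where "S = mat_of_map n (Some \<circ> ?t)"
  have S: "S \<in> carrier_mat n n" by (simp add: S_def)
  have SS: "S * S = 1\<^sub>m n" unfolding S_def using l n
    by (intro mat_of_map_inverse) (auto simp: Transposition.transpose_def)
  define a where "a = S *\<^sub>v v"
  have a: "a \<in> carrier_vec n" using S v(1) by (simp add: a_def)
  have a0: "a $ 0 = v $ l" unfolding a_def S_def
    by (rule mat_of_map_mult_vec_unique[OF n v(1) l(1)]) (auto simp: Transposition.transpose_def split: if_splits)
  define P1 :: "'a mat" where "P1 = mat n n (\<lambda>(r, c). if c = 0 then a $ r else if r = c then 1 else 0)"
  have P1: "P1 \<in> carrier_mat n n" by (simp add: P1_def)
  have "det P1 = prod_list (diag_mat P1)"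
    by (rule det_lower_triangular[OF _ P1]) (auto simp: P1_def)
  also have "\<dots> \<noteq> 0"
    unfolding prod_list_zero_iff using a0 l by (auto simp: diag_mat_def P1_def)
  finally obtain Q1 where Q1: "Q1 \<in> carrier_mat n n" "Q1 * P1 = 1\<^sub>m n" "P1 * Q1 = 1\<^sub>m n"
    using det_non_zero_imp_unit[OF P1, of "()"] by (auto simp: Units_def ring_mat_def)
  have "col (S * P1) 0 = S *\<^sub>v col P1 0" by (rule col_mult2[OF S P1 n])
  also have "col P1 0 = a" using n a unfolding P1_def by (intro eq_vecI) auto
  also have "S *\<^sub>v a = v" unfolding a_def using S SS v(1) by (simp flip: assoc_mult_mat_vec)
  finally have col: "col (S * P1) 0 = v" .
  have "S * P1 * (Q1 * S) = S * (P1 * Q1) * S" "Q1 * S * (S * P1) = Q1 * (S * S) * P1"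
    using S P1 Q1(1) by (simp_all add: assoc_mult_mat[of _ n n _ n _ n])
  then have "S * P1 * (Q1 * S) = 1\<^sub>m n" "Q1 * S * (S * P1) = 1\<^sub>m n"
    using S P1 Q1 SS by simp_all
  with col show ?thesis by (intro that[OF mult_carrier_mat[OF S P1] mult_carrier_mat[OF Q1(1) S]])
qed

lemma pow_four_block_mat_lower_zero:
  assumes "A \<in> carrier_mat n n" "B \<in> carrier_mat n m" "D \<in> carrier_mat m m"
  shows "\<exists>B'. B' \<in> carrier_mat n m \<and>
    four_block_mat A B (0\<^sub>m m n) D ^\<^sub>m k = four_block_mat (A ^\<^sub>m k) B' (0\<^sub>m m n) (D ^\<^sub>m k :: 'a :: semiring_1 mat)"
proof (induction k)
  case 0
  show ?case using assms by (intro exI[of _ "0\<^sub>m n m"]) auto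
next
  case (Suc k)
  then obtain B' where B': "B' \<in> carrier_mat n m"
    and pow: "four_block_mat A B (0\<^sub>m m n) D ^\<^sub>m k = four_block_mat (A ^\<^sub>m k) B' (0\<^sub>m m n) (D ^\<^sub>m k)" by blast
  have "four_block_mat A B (0\<^sub>m m n) D ^\<^sub>m Suc k
      = four_block_mat (A ^\<^sub>m k * A + B' * 0\<^sub>m m n) (A ^\<^sub>m k * B + B' * D)
          (0\<^sub>m m n * A + D ^\<^sub>m k * 0\<^sub>m m n) (0\<^sub>m m n * B + D ^\<^sub>m k * D)"
    unfolding pow_mat.simps pow using assms B' by (intro mult_four_block_mat) auto
  also have "\<dots> = four_block_mat (A ^\<^sub>m Suc k) (A ^\<^sub>m k * B + B' * D) (0\<^sub>m m n) (D ^\<^sub>m Suc k)"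
    using assms B' by (intro cong_four_block_mat) auto
  finally show ?case using assms B' by (intro exI[of _ "A ^\<^sub>m k * B + B' * D"]) auto
qed

lemma nilpotent_four_block_lower_right:
  assumes "A \<in> carrier_mat n n" "B \<in> carrier_mat n m" "D \<in> carrier_mat m m"
    and "four_block_mat A B (0\<^sub>m m n) D ^\<^sub>m k = 0\<^sub>m (n + m) (n + m)"
  shows "D ^\<^sub>m k = (0\<^sub>m m m :: 'a :: semiring_1 mat)"
proof -
  obtain B' where B': "B' \<in> carrier_mat n m"
    and pow: "four_block_mat A B (0\<^sub>m m n) D ^\<^sub>m k = four_block_mat (A ^\<^sub>m k) B' (0\<^sub>m m n) (D ^\<^sub>m k)"
    using pow_four_block_mat_lower_zero[OF assms(1-3)] by blast
  show ?thesis
  proof (rule eq_matI)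
    fix i j assume ij: "i < dim_row (0\<^sub>m m m :: 'a mat)" "j < dim_col (0\<^sub>m m m :: 'a mat)"
    then have "(D ^\<^sub>m k) $$ (i, j) = (four_block_mat A B (0\<^sub>m m n) D ^\<^sub>m k) $$ (n + i, n + j)"
      using assms(1,3) B' by (simp add: pow)
    with ij show "(D ^\<^sub>m k) $$ (i, j) = 0\<^sub>m m m $$ (i, j)" using assms(4) by simp
  qed (use assms(3) in auto)
qed

lemma first_col_zero_four_block:
  assumes "B \<in> carrier_mat (Suc m) (Suc m)" "col B 0 = 0\<^sub>v (Suc m)"
  shows "B = four_block_mat (0\<^sub>m 1 1) (mat 1 m (\<lambda>(_, j). B $$ (0, Suc j))) (0\<^sub>m m 1)
    (mat m m (\<lambda>(i, j). B $$ (Suc i, Suc j)))"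
proof -
  have "B $$ (i, 0) = 0" if "i < Suc m" for i
  proof -
    have "B $$ (i, 0) = col B 0 $ i" using that assms(1) by simp
    then show ?thesis using that assms(2) by simp
  qed
  then show ?thesis using assms(1) by (intro eq_matI) (auto simp: less_Suc_eq_0_disj)
qed

lemma nilpotent_similar_first_col_zero:
  assumes X: "(X :: 'a :: field mat) \<in> carrier_mat (Suc m) (Suc m)" and nil: "X ^\<^sub>m k = 0\<^sub>m (Suc m) (Suc m)"
  obtains B where "B \<in> carrier_mat (Suc m) (Suc m)" "col B 0 = 0\<^sub>v (Suc m)" "B ^\<^sub>m k = 0\<^sub>m (Suc m) (Suc m)"
    "similar_mat X B"
proof -
  let ?N = "Suc m"
  obtain v where v: "v \<in> carrier_vec ?N" "v \<noteq> 0\<^sub>v ?N" "X *\<^sub>v v = 0\<^sub>v ?N"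
    using nilpotent_kernel_vec[OF X nil] by auto
  obtain P Q where P: "P \<in> carrier_mat ?N ?N" and Q: "Q \<in> carrier_mat ?N ?N"
    and PQ: "P * Q = 1\<^sub>m ?N" "Q * P = 1\<^sub>m ?N" and colP: "col P 0 = v"
    by (rule invertible_mat_first_col[OF v(1,2)])
  define B where "B = Q * X * P"
  have B: "B \<in> carrier_mat ?N ?N" using X P Q by (simp add: B_def)
  have "P * B * Q = (P * Q) * X * (P * Q)"
    using X P Q by (simp add: B_def assoc_mult_mat[of _ ?N ?N _ ?N _ ?N])
  then have "X = P * B * Q" using X PQ by simp
  then have wit: "similar_mat_wit X B P Q" using X B P Q PQ by (intro similar_mat_witI)
  have "col B 0 = (Q * X) *\<^sub>v col P 0" unfolding B_def using X P Q by (intro col_mult2) auto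
  also have "\<dots> = Q *\<^sub>v (X *\<^sub>v v)" unfolding colP using X Q v(1) by (intro assoc_mult_mat_vec) auto
  also have "\<dots> = 0\<^sub>v ?N" by (simp add: v(3) mult_mat_vec_zero[OF Q])
  finally have "col B 0 = 0\<^sub>v ?N" .
  moreover have "B ^\<^sub>m k = 0\<^sub>m ?N ?N"
    using similar_mat_wit_pow_id[OF similar_mat_wit_sym[OF wit], of k] nil P Q by simp
  ultimately show ?thesis using that B wit unfolding similar_mat_def by blast
qed

lemma nilpotent_similar_four_block:
  assumes X: "(X :: 'a :: field mat) \<in> carrier_mat (Suc m) (Suc m)" and nil: "X ^\<^sub>m k = 0\<^sub>m (Suc m) (Suc m)"
  obtains B2 B4 where "B2 \<in> carrier_mat 1 m" "B4 \<in> carrier_mat m m" "B4 ^\<^sub>m k = 0\<^sub>m m m"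
    "similar_mat X (four_block_mat (0\<^sub>m 1 1) B2 (0\<^sub>m m 1) B4)"
proof -
  obtain B where B: "B \<in> carrier_mat (Suc m) (Suc m)" "col B 0 = 0\<^sub>v (Suc m)"
    "B ^\<^sub>m k = 0\<^sub>m (Suc m) (Suc m)" "similar_mat X B"
    by (rule nilpotent_similar_first_col_zero[OF X nil])
  let ?B2 = "mat 1 m (\<lambda>(_, j). B $$ (0, Suc j))" and ?B4 = "mat m m (\<lambda>(i, j). B $$ (Suc i, Suc j))"
  have blocks: "B = four_block_mat (0\<^sub>m 1 1) ?B2 (0\<^sub>m m 1) ?B4" by (rule first_col_zero_four_block[OF B(1,2)])
  have "?B4 ^\<^sub>m k = 0\<^sub>m m m"
    by (rule nilpotent_four_block_lower_right[of "0\<^sub>m 1 1" 1 ?B2]) (use B(3) blocks in auto)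
  moreover have "similar_mat X (four_block_mat (0\<^sub>m 1 1) ?B2 (0\<^sub>m m 1) ?B4)"
    using B(4) unfolding blocks[symmetric] .
  ultimately show ?thesis by (intro that) simp_all
qed

lemma nilpotent_similar_strictly_upper_triangular:
  assumes "(X :: 'a :: field mat) \<in> carrier_mat n n" "X ^\<^sub>m k = 0\<^sub>m n n"
  shows "\<exists>T. T \<in> carrier_mat n n \<and> similar_mat X T \<and> upper_triangular T \<and> diag_mat T = replicate n 0"
  using assms
proof (induction n arbitrary: X)
  case 0
  then show ?case using similar_mat_refl[OF "0.prems"(1)] by (auto simp: upper_triangular_def diag_mat_def)
next
  case (Suc m)
  obtain B2 B4 where B2: "B2 \<in> carrier_mat 1 m" and B4: "B4 \<in> carrier_mat m m" "B4 ^\<^sub>m k = 0\<^sub>m m m"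
    and XB: "similar_mat X (four_block_mat (0\<^sub>m 1 1) B2 (0\<^sub>m m 1) B4)"
    by (rule nilpotent_similar_four_block[OF Suc.prems])
  obtain T' where T': "T' \<in> carrier_mat m m" "similar_mat B4 T'" "upper_triangular T'" "diag_mat T' = replicate m 0"
    using Suc.IH[OF B4] by blast
  obtain B0 where B0: "B0 \<in> carrier_mat 1 m"
    and BT: "similar_mat (four_block_mat (0\<^sub>m 1 1) B2 (0\<^sub>m m 1) B4) (four_block_mat (0\<^sub>m 1 1) B0 (0\<^sub>m m 1) T')"
    using similar_mat_four_block_0_ex[OF similar_mat_refl[OF zero_carrier_mat] T'(2) B2 zero_carrier_mat B4(1)]
    by auto
  have "similar_mat X (four_block_mat (0\<^sub>m 1 1) B0 (0\<^sub>m m 1) T')" by (rule similar_mat_trans[OF XB BT])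
  moreover have "upper_triangular (four_block_mat (0\<^sub>m 1 1) B0 (0\<^sub>m m 1) T')"
    by (rule upper_triangular_four_block) (use T' in \<open>auto simp: upper_triangular_def\<close>)
  moreover have "diag_mat (four_block_mat (0\<^sub>m 1 1) B0 (0\<^sub>m m 1) T') = replicate (Suc m) 0"
    unfolding diag_four_block_mat[OF zero_carrier_mat[of 1 1] T'(1)] T'(4) by (simp add: diag_mat_def)
  ultimately show ?case using B0 T'(1) by (intro exI[of _ "four_block_mat (0\<^sub>m 1 1) B0 (0\<^sub>m m 1) T'"]) auto
qed

lemma nilpotent_similar_J_part:
  assumes X: "(X :: 'a :: field mat) \<in> carrier_mat n n" and nil: "X ^\<^sub>m k = 0\<^sub>m n n"
  obtains mu where "\<forall>a \<in> set mu. 0 < a" "sum_list mu = n" "similar_mat X (J_part mu)"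
proof -
  obtain T where T: "T \<in> carrier_mat n n" "similar_mat X T" "upper_triangular T" "diag_mat T = replicate n 0"
    using nilpotent_similar_strictly_upper_triangular[OF X nil] by blast
  define n_as where "n_as = triangular_to_jnf_vector T"
  have jnf: "jordan_nf X n_as"
    using triangular_to_jnf_vector[OF T(1,3)] similar_mat_trans[OF T(2)] unfolding n_as_def jordan_nf_def by blast
  have char_poly: "char_poly X = [:0, 1:] ^ n"
    using char_poly_similar[OF T(2)] char_poly_upper_triangular[OF T(1,3)] T(4) by (simp add: prod_list_replicate)
  have ev: "a = 0" if "(m, a) \<in> set n_as" for m a
  proof -
    have "m \<noteq> 0" using jnf that unfolding jordan_nf_def by force
    then have "poly ([:- a, 1:] ^ m) a = 0" by (simp add: poly_power)
    then have "poly (char_poly X) a = 0"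
      using that unfolding jordan_nf_char_poly[OF jnf] poly_prod_list prod_list_zero_iff by force
    then show "a = 0" by (simp add: char_poly poly_power)
  qed
  define mu where "mu = map fst n_as"
  have n_as: "n_as = map (\<lambda>a. (a, 0)) mu" unfolding mu_def map_map by (rule sym, rule map_idI) (auto simp: ev)
  have "similar_mat X (J_part mu)" using jnf unfolding jordan_nf_def J_part_def n_as by simp
  moreover have "\<forall>a \<in> set mu. 0 < a" using jnf unfolding jordan_nf_def mu_def by force
  moreover have "sum_list mu = n"
  proof -
    obtain n' P Q where "{X, J_part mu, P, Q} \<subseteq> carrier_mat n' n'"
      using similar_matD[OF \<open>similar_mat X (J_part mu)\<close>] by blast
    then have "X \<in> carrier_mat n' n'" "(J_part mu :: 'a mat) \<in> carrier_mat n' n'" by simp_all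
    then show ?thesis using X by (metis J_part_dim(1) carrier_matD(1))
  qed
  ultimately show ?thesis using that by blast
qed

lemma similar_J_part_permute_list:
  assumes p: "p permutes {..<length mu}"
  shows "similar_mat (J_part (permute_list p mu) :: 'a :: field mat) (J_part mu)"
proof -
  define lam where "lam = permute_list p mu"
  let ?n = "sum_list mu"
  have len: "length lam = length mu" and lam_nth: "\<And>i. i < length mu \<Longrightarrow> lam ! i = mu ! p i"
    by (simp_all add: lam_def permute_list_nth[OF p])
  have sum: "sum_list lam = ?n" by (simp add: lam_def mset_permute_list[OF p] flip: sum_mset_sum_list)
  have p_less: "\<And>i. i < length mu \<Longrightarrow> p i < length mu" and inv_less: "\<And>i. i < length mu \<Longrightarrow> Hilbert_Choice.inv p i < length mu"
    using permutes_in_image[OF p] permutes_in_image[OF permutes_inv[OF p]] by auto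
  note inv_p = permutes_inverses[OF p]
  define \<tau> where "\<tau> r = (case block_coord lam r of (i, s) \<Rightarrow> block_idx mu (p i) s)" for r
  define \<sigma> where "\<sigma> r = (case block_coord mu r of (i, s) \<Rightarrow> block_idx lam (Hilbert_Choice.inv p i) s)" for r
  have \<tau>: "\<tau> (block_idx lam i s) = block_idx mu (p i) s" if "i < length lam" "s < lam ! i" for i s
    using that by (simp add: \<tau>_def)
  have \<sigma>: "\<sigma> (block_idx mu i s) = block_idx lam (Hilbert_Choice.inv p i) s" if "i < length mu" "s < mu ! i" for i s
    using that by (simp add: \<sigma>_def)
  have \<tau>\<sigma>: "\<sigma> r < ?n \<and> \<tau> (\<sigma> r) = r" if "r < ?n" for r
  proof -
    from that obtain i s where "i < length mu" "s < mu ! i" "r = block_idx mu i s" by (rule block_idxE)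
    then show ?thesis using \<sigma> \<tau> len lam_nth inv_less inv_p block_idx_less[of "Hilbert_Choice.inv p i" lam s, unfolded sum] by auto
  qed
  have \<sigma>\<tau>: "\<tau> r < ?n \<and> \<sigma> (\<tau> r) = r" if "r < ?n" for r
  proof -
    from that obtain i s where "i < length lam" "s < lam ! i" "r = block_idx lam i s"
      by (rule block_idxE[of r lam, unfolded sum])
    then show ?thesis using \<sigma> \<tau> len lam_nth p_less inv_p block_idx_less[of "p i" mu s] by auto
  qed
  have "(J_part lam :: 'a mat) = mat_of_map ?n (\<lambda>r. map_option \<sigma> (jordan_shift mu 1 (\<tau> r)))"
    unfolding J_part_eq_mat_of_map sum[symmetric]
  proof (rule mat_of_map_block_cong)
    fix i s assume "i < length lam" "s < lam ! i"
    then show "jordan_shift lam 1 (block_idx lam i s) = map_option \<sigma> (jordan_shift mu 1 (\<tau> (block_idx lam i s)))"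
      using \<sigma> \<tau> len lam_nth p_less inv_p by auto
  qed
  then show ?thesis
    unfolding lam_def[symmetric] J_part_eq_mat_of_map[of mu]
    by (simp only: similar_mat_of_map_conj[OF \<tau>\<sigma> \<sigma>\<tau> map_closed_jordan_shift])
qed

lemma nilpotent_similar_J_part_partition:
  assumes "(X :: 'a :: field mat) \<in> carrier_mat n n" "X ^\<^sub>m k = 0\<^sub>m n n"
  obtains lam where "is_partition n lam" "similar_mat X (J_part lam)"
proof -
  obtain mu where mu: "\<forall>a \<in> set mu. 0 < a" "sum_list mu = n" "similar_mat X (J_part mu)"
    by (rule nilpotent_similar_J_part[OF assms])
  define lam where "lam = rev (sort mu)"
  have "mset lam = mset mu" by (simp add: lam_def)
  then obtain p where "p permutes {..<length mu}" "permute_list p mu = lam" by (rule mset_eq_permutation)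
  then have "similar_mat (J_part lam :: 'a mat) (J_part mu)" using similar_J_part_permute_list by metis
  then have "similar_mat X (J_part lam)" using mu(3) similar_mat_sym similar_mat_trans by blast
  moreover have "is_partition n lam"
    using mu(1,2) \<open>mset lam = mset mu\<close> unfolding is_partition_def
    by (auto simp: lam_def sorted_wrt_rev simp flip: sum_mset_sum_list)
  ultimately show ?thesis using that by blast
qed

section \<open>Classification of the orbits\<close>

lemma enh_nilcone_orbit_eq_O_enh:
  assumes "(X, w) \<in> (enh_nilcone n :: ('a :: field mat \<times> 'a vec) set)"
  obtains lam q where "(lam, q) \<in> enhanced_partitions n" "enh_orbit n (X, w) = O_enh n lam q"
proof -
  obtain k where X: "X \<in> carrier_mat n n" and nil: "X ^\<^sub>m k = 0\<^sub>m n n" and w: "w \<in> carrier_vec n"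
    using assms unfolding enh_nilcone_def by auto
  obtain lam where lam: "is_partition n lam" and "similar_mat X (J_part lam)"
    by (rule nilpotent_similar_J_part_partition[OF X nil])
  then obtain g h where "similar_mat_wit (J_part lam) X h g"
    unfolding similar_mat_def using similar_mat_wit_sym by blast
  from enh_orbit_conj[OF this X w]
  have "(J_part lam, h *\<^sub>v w) \<in> enh_orbit n (X, w)" .
  moreover obtain q where q: "q \<in> enh_q lam"
    and "(J_part lam, u_vec n lam q) \<in> enh_orbit n (J_part lam, h *\<^sub>v w)"
    using enh_orbit_J_part_normal_form[OF lam enh_orbit_carrier(2)[OF calculation X w]] by blast
  ultimately have "(J_part lam, u_vec n lam q) \<in> enh_orbit n (X, w)"
    using enh_orbit_trans X w by blast
  then have "enh_orbit n (X, w) = O_enh n lam q"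
    unfolding O_enh_def using enh_orbit_eq[OF _ X w] by simp
  with lam q show ?thesis using that by (simp add: enhanced_partitions_def)
qed

lemma O_enh_rep_mem_enh_nilcone:
  assumes "(lam, q) \<in> enhanced_partitions n"
  shows "(J_part lam, u_vec n lam q) \<in> (enh_nilcone n :: ('a :: field mat \<times> 'a vec) set)"
proof -
  have "n = sum_list lam" using assms by (simp add: enhanced_partitions_def is_partition_def)
  then show ?thesis
    unfolding enh_nilcone_def using J_part_carrier J_part_nilpotent u_vec_carrier by blast
qed

theorem theorem3p5:
  fixes n :: nat
  assumes "alg_closed TYPE('a :: field)"
  shows "{enh_orbit n xw | xw. xw \<in> (enh_nilcone n :: ('a mat \<times> 'a vec) set)}
           = (\<lambda>(lam, q). (O_enh n lam q :: ('a mat \<times> 'a vec) set)) ` enhanced_partitions n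
      \<and> inj_on (\<lambda>(lam, q). (O_enh n lam q :: ('a mat \<times> 'a vec) set)) (enhanced_partitions n)"
proof (intro conjI equalityI subsetI)
  fix S assume "S \<in> {enh_orbit n xw | xw. xw \<in> (enh_nilcone n :: ('a mat \<times> 'a vec) set)}"
  then obtain X w where "S = enh_orbit n (X, w)" "(X, w) \<in> (enh_nilcone n :: ('a mat \<times> 'a vec) set)"
    by auto
  then show "S \<in> (\<lambda>(lam, q). (O_enh n lam q :: ('a mat \<times> 'a vec) set)) ` enhanced_partitions n"
    by (metis (no_types, lifting) enh_nilcone_orbit_eq_O_enh case_prod_conv image_eqI)
next
  fix S assume "S \<in> (\<lambda>(lam, q). (O_enh n lam q :: ('a mat \<times> 'a vec) set)) ` enhanced_partitions n"
  then obtain lam q where "(lam, q) \<in> enhanced_partitions n" "S = O_enh n lam q" by auto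
  then show "S \<in> {enh_orbit n xw | xw. xw \<in> (enh_nilcone n :: ('a mat \<times> 'a vec) set)}"
    unfolding O_enh_def using O_enh_rep_mem_enh_nilcone by blast
next
  show "inj_on (\<lambda>(lam, q). (O_enh n lam q :: ('a mat \<times> 'a vec) set)) (enhanced_partitions n)"
    using O_enh_inj by (fastforce intro: inj_onI)
qed

end
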